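(* Let $A$ be an orientable surface group, $p$ a prime, and $\mathcal{S}$ a directed set of normal subgroups of $p$-power index in $A$ such that $\varprojlim_{U\in\mathcal{S}}H_1(U,\mathbb{F}_p)=0$ (transition maps induced by inclusions). Then the completion $\overline{A}=\varprojlim_{U\in\mathcal{S}}A/U$ is isomorphic (via the natural epimorphism $\widehat{A}_p\to\overline{A}$) to the pro-$p$ completion $\widehat{A}_p$.
   Context: An orientable surface group is the fundamental group of a closed orientable surface of genus $\ge1$. A set of subgroups is directed if any two contain a common member. *)

theory Defs
  imports "HOL-Algebra.Algebra" "HOL-Library.FuncSet" "HOL-Computational_Algebra.Primes"
begin

text \<open>Letters: (k, False) is the k-th generator, (k, True) its inverse.\<close>

fun fg_reduce :: "(nat \<times> bool) list \<Rightarrow> (nat \<times> bool) list" where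
  "fg_reduce [] = []"
| "fg_reduce (x # xs) =
     (case fg_reduce xs of
        [] \<Rightarrow> [x]
      | y # ys \<Rightarrow> (if fst x = fst y \<and> snd x \<noteq> snd y then ys else x # y # ys))"

definition fg_inv_letter :: "nat \<times> bool \<Rightarrow> nat \<times> bool" where
  "fg_inv_letter x = (fst x, \<not> snd x)"

definition free_group :: "nat \<Rightarrow> (nat \<times> bool) list monoid" where
  "free_group n = \<lparr> carrier = {w. set w \<subseteq> {..<n} \<times> UNIV \<and> fg_reduce w = w},
                    monoid.mult = (\<lambda>u v. fg_reduce (u @ v)),
                    monoid.one = [] \<rparr>"

text \<open>Surface relator [a_1,b_1]...[a_g,b_g], with a_i = generator 2i, b_i = generator 2i+1.\<close>
definition surface_relator :: "nat \<Rightarrow> (nat \<times> bool) list" where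
  "surface_relator g = fg_reduce (concat (map (\<lambda>i. [(2*i, False), (2*i+1, False), (2*i, True), (2*i+1, True)]) [0..<g]))"

definition surface_relator_closure :: "nat \<Rightarrow> (nat \<times> bool) list set" where
  "surface_relator_closure g =
     generate (free_group (2*g))
       {fg_reduce (w @ surface_relator g @ rev (map fg_inv_letter w)) | w. w \<in> carrier (free_group (2*g))}"

definition surface_group :: "nat \<Rightarrow> (nat \<times> bool) list set monoid" where
  "surface_group g = free_group (2*g) Mod surface_relator_closure g"

definition orientable_surface_group :: "('a, 'b) monoid_scheme \<Rightarrow> bool" where
  "orientable_surface_group A \<longleftrightarrow> group A \<and> (\<exists>g::nat. g \<ge> 1 \<and> A \<cong> surface_group g)"

definition p_power_index_normals :: "('a, 'b) monoid_scheme \<Rightarrow> nat \<Rightarrow> 'a set set" where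
  "p_power_index_normals A p = {U. U \<lhd> A \<and> (\<exists>k::nat. card (rcosets\<^bsub>A\<^esub> U) = p ^ k)}"

definition directed_family :: "'a set set \<Rightarrow> bool" where
  "directed_family S \<longleftrightarrow> S \<noteq> {} \<and> (\<forall>U\<in>S. \<forall>V\<in>S. \<exists>W\<in>S. W \<subseteq> U \<and> W \<subseteq> V)"

definition frattini_p :: "('a, 'b) monoid_scheme \<Rightarrow> nat \<Rightarrow> 'a set \<Rightarrow> 'a set" where
  "frattini_p A p U = generate A ({x [^]\<^bsub>A\<^esub> p | x. x \<in> U} \<union>
      {x \<otimes>\<^bsub>A\<^esub> y \<otimes>\<^bsub>A\<^esub> inv\<^bsub>A\<^esub> x \<otimes>\<^bsub>A\<^esub> inv\<^bsub>A\<^esub> y | x y. x \<in> U \<and> y \<in> U})"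

definition H1_mod_p :: "('a, 'b) monoid_scheme \<Rightarrow> nat \<Rightarrow> 'a set \<Rightarrow> 'a set monoid" where
  "H1_mod_p A p U = (A\<lparr>carrier := U\<rparr>) Mod frattini_p A p U"

text \<open>Compatible families; the transition map H_1(V) \<rightarrow> H_1(U) for V \<subseteq> U, induced by
  inclusion, sends the coset Phi(V) x to Phi(U) x = Phi(U) <#> (Phi(V) x).\<close>
definition H1_limit :: "('a, 'b) monoid_scheme \<Rightarrow> nat \<Rightarrow> 'a set set \<Rightarrow> ('a set \<Rightarrow> 'a set) set" where
  "H1_limit A p S = {h. h \<in> extensional S \<and> (\<forall>U\<in>S. h U \<in> carrier (H1_mod_p A p U)) \<and>
      (\<forall>U\<in>S. \<forall>V\<in>S. V \<subseteq> U \<longrightarrow> frattini_p A p U <#>\<^bsub>A\<^esub> h V = h U)}"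

definition quot_limit :: "('a, 'b) monoid_scheme \<Rightarrow> 'a set set \<Rightarrow> ('a set \<Rightarrow> 'a set) monoid" where
  "quot_limit A S = \<lparr> carrier = {c. c \<in> extensional S \<and> (\<forall>U\<in>S. c U \<in> rcosets\<^bsub>A\<^esub> U) \<and>
                                   (\<forall>U\<in>S. \<forall>V\<in>S. V \<subseteq> U \<longrightarrow> c V \<subseteq> c U)},
                      monoid.mult = (\<lambda>c d. \<lambda>U\<in>S. c U <#>\<^bsub>A\<^esub> d U),
                      monoid.one = (\<lambda>U\<in>S. U) \<rparr>"

definition pro_p_completion :: "('a, 'b) monoid_scheme \<Rightarrow> nat \<Rightarrow> ('a set \<Rightarrow> 'a set) monoid" where
  "pro_p_completion A p = quot_limit A (p_power_index_normals A p)"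

end

theory Submission
  imports Defs
begin

text \<open>
  The restriction map from the pro-p completion to the completion along S is an isomorphism
  as soon as S is cofinal among the normal subgroups of p-power index, so everything rests on
  cofinality. Given such a subgroup, induct on the index of the normal subgroups M above it:
  since A/M is a p-group, there is a normal M' \<supseteq> M with M'/M central of order p, and by
  induction some U \<in> S lies in M'. If no member of S lay in M, a Koenig-type argument over
  the finite groups H_1(V, F_p), V \<in> S below U, would give a compatible family of classes all
  meeting a fixed coset of M outside M. Since the limit of the H_1(V, F_p) vanishes, this
  family is trivial, so at a suitable V \<subseteq> M' the coset lies in the Frattini subgroup
  V^p[V,V] \<subseteq> M, a contradiction. The groups H_1(V, F_p) are finite because V has finite
  index in the finitely generated group A (Schreier); of the surface group only its finite
  generation is used.
\<close>

section \<open>Free groups and surface groups\<close>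

definition fg_cancel :: "nat \<times> bool \<Rightarrow> nat \<times> bool \<Rightarrow> bool" where
  "fg_cancel x y \<longleftrightarrow> fst x = fst y \<and> snd x \<noteq> snd y"

fun fg_reduced :: "(nat \<times> bool) list \<Rightarrow> bool" where
  "fg_reduced [] = True"
| "fg_reduced [x] = True"
| "fg_reduced (x # y # zs) = (\<not> fg_cancel x y \<and> fg_reduced (y # zs))"

lemma fg_reduced_tl: "fg_reduced (x # xs) \<Longrightarrow> fg_reduced xs"
  by (cases xs) auto

lemma fg_reduce_reduced: "fg_reduced (fg_reduce xs)"
  by (induction xs) (auto split: list.split simp: fg_cancel_def dest: fg_reduced_tl)

lemma fg_reduced_fix: "fg_reduced xs \<Longrightarrow> fg_reduce xs = xs"
proof (induction xs)
  case (Cons x xs)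
  then show ?case
    by (cases xs) (auto simp: fg_cancel_def)
qed simp

lemma fg_reduce_idem: "fg_reduce (fg_reduce xs) = fg_reduce xs"
  by (rule fg_reduced_fix[OF fg_reduce_reduced])

lemma fg_reduce_append_reduce_right [simp]: "fg_reduce (xs @ fg_reduce ys) = fg_reduce (xs @ ys)"
  by (induction xs) (simp_all add: fg_reduce_idem)

lemma fg_reduce_cancel_Cons:
  assumes "fg_cancel x y" shows "fg_reduce (x # y # bs) = fg_reduce bs"
proof (cases "fg_reduce bs")
  case (Cons z zs)
  have "fg_reduced (z # zs)" using Cons fg_reduce_reduced by metis
  then show ?thesis
    using Cons assms by (cases zs) (auto simp: fg_cancel_def prod_eq_iff)
qed (use assms in \<open>simp add: fg_cancel_def\<close>)

lemma fg_reduce_cancel: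
  assumes "fg_cancel y y'" shows "fg_reduce (as @ y # y' # bs) = fg_reduce (as @ bs)"
  by (metis assms fg_reduce_append_reduce_right fg_reduce_cancel_Cons)

lemma fg_reduce_append_reduce_left [simp]: "fg_reduce (fg_reduce xs @ ys) = fg_reduce (xs @ ys)"
proof (induction xs arbitrary: ys)
  case (Cons x xs)
  have "fg_reduce (fg_reduce (x # xs) @ ys) = fg_reduce (x # fg_reduce xs @ ys)"
  proof (cases "fg_reduce xs")
    case (Cons y zs)
    then show ?thesis
      using fg_reduce_cancel_Cons[of x y "zs @ ys"] by (auto simp: fg_cancel_def)
  qed simp
  also have "\<dots> = fg_reduce (x # xs @ ys)"
    using fg_reduce_append_reduce_right[of "[x]"] Cons.IH by (metis append_Cons append_Nil)
  finally show ?case by simp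
qed simp

lemma fg_reduce_inverse_append: "fg_reduce (rev (map fg_inv_letter w) @ w) = []"
proof (induction w)
  case (Cons x xs)
  have "fg_cancel (fg_inv_letter x) x" by (simp add: fg_cancel_def fg_inv_letter_def)
  then show ?case using fg_reduce_cancel Cons by (metis append.assoc append_Cons append_Nil list.simps(9) rev.simps(2))
qed simp

lemma fg_reduce_set: "set (fg_reduce xs) \<subseteq> set xs"
  by (induction xs) (auto split: list.split)

lemma free_group_carrier_iff:
  "w \<in> carrier (free_group n) \<longleftrightarrow> set w \<subseteq> {..<n} \<times> UNIV \<and> fg_reduce w = w"
  by (simp add: free_group_def)

lemma fg_reduce_in_free_group:
  "set w \<subseteq> {..<n} \<times> UNIV \<Longrightarrow> fg_reduce w \<in> carrier (free_group n)"
  using fg_reduce_set[of w] by (auto simp: free_group_carrier_iff fg_reduce_idem)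

lemma free_group_mult [simp]: "u \<otimes>\<^bsub>free_group n\<^esub> v = fg_reduce (u @ v)"
  by (simp add: free_group_def)

lemma free_group_one [simp]: "\<one>\<^bsub>free_group n\<^esub> = []"
  by (simp add: free_group_def)

lemma set_formal_inverse:
  "set w \<subseteq> {..<n} \<times> UNIV \<Longrightarrow> set (rev (map fg_inv_letter w)) \<subseteq> {..<n} \<times> UNIV"
  by (auto simp: fg_inv_letter_def)

lemma free_group_group: "group (free_group n)"
proof (rule groupI)
  fix x y assume "x \<in> carrier (free_group n)" "y \<in> carrier (free_group n)"
  then show "x \<otimes>\<^bsub>free_group n\<^esub> y \<in> carrier (free_group n)"
    using fg_reduce_in_free_group[of "x @ y" n] by (simp add: free_group_carrier_iff)
next
  fix x assume "x \<in> carrier (free_group n)"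
  then have "fg_reduce (rev (map fg_inv_letter x)) \<in> carrier (free_group n)"
    by (intro fg_reduce_in_free_group set_formal_inverse) (simp add: free_group_carrier_iff)
  moreover have "fg_reduce (rev (map fg_inv_letter x)) \<otimes>\<^bsub>free_group n\<^esub> x = \<one>\<^bsub>free_group n\<^esub>"
    by (simp add: fg_reduce_inverse_append del: free_group_one) simp
  ultimately show "\<exists>y\<in>carrier (free_group n). y \<otimes>\<^bsub>free_group n\<^esub> x = \<one>\<^bsub>free_group n\<^esub>" by blast
qed (auto simp: free_group_carrier_iff)

lemma free_group_inv_fg_reduce:
  assumes "set w \<subseteq> {..<n} \<times> UNIV"
  shows "inv\<^bsub>free_group n\<^esub> (fg_reduce w) = fg_reduce (rev (map fg_inv_letter w))"
proof -
  interpret group "free_group n" by (rule free_group_group)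
  have "fg_reduce (rev (map fg_inv_letter w)) \<otimes>\<^bsub>free_group n\<^esub> fg_reduce w = \<one>\<^bsub>free_group n\<^esub>"
    by (simp add: fg_reduce_inverse_append)
  then show ?thesis
    using assms fg_reduce_in_free_group set_formal_inverse by (intro inv_equality) auto
qed

lemma free_group_generated_by_letters:
  "generate (free_group n) ((\<lambda>l. [l]) ` ({..<n} \<times> UNIV)) = carrier (free_group n)"
proof -
  interpret group "free_group n" by (rule free_group_group)
  have "w \<in> generate (free_group n) ((\<lambda>l. [l]) ` ({..<n} \<times> UNIV))"
    if "w \<in> carrier (free_group n)" for w
    using that
  proof (induction w)
    case Nil
    then show ?case using generate.one by (metis free_group_one)
  next
    case (Cons l w)
    then have "w \<in> carrier (free_group n)"
      using fg_reduced_tl fg_reduce_reduced fg_reduced_fix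
      by (metis free_group_carrier_iff set_subset_Cons subset_trans)
    moreover have "[l] \<otimes>\<^bsub>free_group n\<^esub> w = l # w"
      using Cons.prems by (simp add: free_group_carrier_iff)
    moreover have "l \<in> {..<n} \<times> UNIV"
      using Cons.prems by (auto simp: free_group_carrier_iff)
    ultimately show ?case
      using Cons.IH generate.eng[OF generate.incl] by (metis image_eqI)
  qed
  moreover have "(\<lambda>l. [l]) ` ({..<n} \<times> UNIV) \<subseteq> carrier (free_group n)"
    by (auto simp: free_group_carrier_iff)
  ultimately show ?thesis using generate_in_carrier by blast
qed

lemma surface_relator_set: "set (surface_relator g) \<subseteq> {..<2*g} \<times> UNIV"
  unfolding surface_relator_def using fg_reduce_set by fastforce

lemma surface_relator_closure_normal: "surface_relator_closure g \<lhd> free_group (2*g)"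
proof -
  interpret group "free_group (2*g)" by (rule free_group_group)
  let ?n = "2*g" and ?r = "surface_relator g" and ?bar = "\<lambda>w. rev (map fg_inv_letter w)"
  let ?R = "{fg_reduce (w @ ?r @ ?bar w) | w. w \<in> carrier (free_group ?n)}"
  have alph: "set (w @ ?r @ ?bar w) \<subseteq> {..<?n} \<times> UNIV" if "set w \<subseteq> {..<?n} \<times> UNIV" for w
    using that surface_relator_set[of g] set_formal_inverse[OF that] by auto
  show ?thesis
    unfolding surface_relator_closure_def
  proof (rule normal_generateI)
    show "?R \<subseteq> carrier (free_group ?n)"
      using alph fg_reduce_in_free_group by (auto simp: free_group_carrier_iff fg_reduce_idem)
  next
    fix h c assume "h \<in> ?R" and c: "c \<in> carrier (free_group ?n)"
    then obtain w where w: "w \<in> carrier (free_group ?n)" and h: "h = fg_reduce (w @ ?r @ ?bar w)"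
      by blast
    have cw: "set (c @ w) \<subseteq> {..<?n} \<times> UNIV" using c w by (simp add: free_group_carrier_iff)
    define u where "u = fg_reduce (c @ w)"
    have u: "u \<in> carrier (free_group ?n)" unfolding u_def using fg_reduce_in_free_group[OF cw] .
    \<comment> \<open>both sides are the free-group inverse of u\<close>
    have "fg_reduce (?bar u) = fg_reduce (?bar (c @ w))"
      using free_group_inv_fg_reduce[OF cw] free_group_inv_fg_reduce[of u ?n] u
      unfolding u_def by (simp add: free_group_carrier_iff fg_reduce_idem)
    then have "fg_reduce (u @ ?r @ ?bar u) = fg_reduce (c @ w @ ?r @ ?bar w @ ?bar c)"
      by (metis append.assoc fg_reduce_append_reduce_left fg_reduce_append_reduce_right rev_append
          map_append u_def)
    moreover have "c \<otimes>\<^bsub>free_group ?n\<^esub> h \<otimes>\<^bsub>free_group ?n\<^esub> inv\<^bsub>free_group ?n\<^esub> c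
        = fg_reduce (c @ w @ ?r @ ?bar w @ ?bar c)"
      using free_group_inv_fg_reduce[of c ?n] c h by (simp add: free_group_carrier_iff)
    ultimately have "c \<otimes>\<^bsub>free_group ?n\<^esub> h \<otimes>\<^bsub>free_group ?n\<^esub> inv\<^bsub>free_group ?n\<^esub> c
        = fg_reduce (u @ ?r @ ?bar u)"
      by simp
    then show "c \<otimes>\<^bsub>free_group ?n\<^esub> h \<otimes>\<^bsub>free_group ?n\<^esub> inv\<^bsub>free_group ?n\<^esub> c \<in> ?R"
      using u by blast
  qed
qed

lemma group_surface_group: "group (surface_group g)"
  unfolding surface_group_def
  by (rule normal.factorgroup_is_group[OF surface_relator_closure_normal])

definition finitely_generated :: "('a, 'b) monoid_scheme \<Rightarrow> bool" where
  "finitely_generated G \<longleftrightarrow> (\<exists>\<Gamma>. finite \<Gamma> \<and> \<Gamma> \<subseteq> carrier G \<and> generate G \<Gamma> = carrier G)"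

lemma (in group_hom) finitely_generated_image:
  assumes "finitely_generated G" and "h ` carrier G = carrier H"
  shows "finitely_generated H"
proof -
  obtain \<Gamma> where \<Gamma>: "finite \<Gamma>" "\<Gamma> \<subseteq> carrier G" "generate G \<Gamma> = carrier G"
    using assms(1) unfolding finitely_generated_def by blast
  then have "generate H (h ` \<Gamma>) = carrier H"
    using generate_img assms(2) by simp
  moreover have "finite (h ` \<Gamma>)" "h ` \<Gamma> \<subseteq> carrier H"
    using \<Gamma> by auto
  ultimately show ?thesis
    unfolding finitely_generated_def by blast
qed

lemma finitely_generated_free_group: "finitely_generated (free_group n)"
proof -
  have "(\<lambda>l. [l]) ` ({..<n} \<times> UNIV) \<subseteq> carrier (free_group n)"
    by (auto simp: free_group_carrier_iff)
  then show ?thesis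
    unfolding finitely_generated_def using free_group_generated_by_letters[of n] finite_imageI
    by (metis finite_SigmaI finite_UNIV finite_lessThan)
qed

lemma finitely_generated_surface_group: "finitely_generated (surface_group g)"
proof -
  interpret N: normal "surface_relator_closure g" "free_group (2*g)"
    by (rule surface_relator_closure_normal)
  interpret group_hom "free_group (2*g)" "surface_group g" "\<lambda>w. surface_relator_closure g #>\<^bsub>free_group (2*g)\<^esub> w"
    using N.r_coset_hom_Mod group_surface_group N.group_axioms
    by (simp add: group_hom_def group_hom_axioms_def surface_group_def)
  show ?thesis
  proof (rule finitely_generated_image[OF finitely_generated_free_group])
    show "(\<lambda>w. surface_relator_closure g #>\<^bsub>free_group (2*g)\<^esub> w) ` carrier (free_group (2*g))
        = carrier (surface_group g)"
      unfolding surface_group_def FactGroup_def RCOSETS_def UNION_singleton_eq_range by simp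
  qed
qed

lemma orientable_surface_group_finitely_generated:
  assumes "orientable_surface_group A"
  shows "finitely_generated A"
proof -
  interpret group A using assms unfolding orientable_surface_group_def by blast
  obtain g where "A \<cong> surface_group g"
    using assms unfolding orientable_surface_group_def by blast
  then obtain \<phi> where \<phi>: "\<phi> \<in> iso (surface_group g) A"
    using iso_sym unfolding is_iso_def by blast
  interpret group_hom "surface_group g" A \<phi>
    using \<phi> group_surface_group is_group
    by (simp add: group_hom_def group_hom_axioms_def iso_def)
  show ?thesis
    using finitely_generated_image[OF finitely_generated_surface_group] \<phi>
    by (simp add: iso_def bij_betw_def)
qed

section \<open>Schreier's lemma\<close>

text \<open>The coset H itself is represented by \<one>, so that Schreier rewriting returns elements of H unchanged.\<close>
definition coset_rep :: "('a, 'b) monoid_scheme \<Rightarrow> 'a set \<Rightarrow> 'a \<Rightarrow> 'a" where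
  "coset_rep G H x = (if H #>\<^bsub>G\<^esub> x = H then \<one>\<^bsub>G\<^esub> else SOME y. y \<in> H #>\<^bsub>G\<^esub> x)"

context group
begin

lemma inv_cancel_left [simp]: "x \<in> carrier G \<Longrightarrow> y \<in> carrier G \<Longrightarrow> inv x \<otimes> (x \<otimes> y) = y"
  by (simp add: m_assoc[symmetric])

lemma coset_rep_mem:
  assumes "subgroup H G" "x \<in> carrier G"
  shows "coset_rep G H x \<in> H #> x"
  using rcos_self[OF assms(2,1)] subgroup.one_closed[OF assms(1)]
  unfolding coset_rep_def by (auto intro: someI)

lemma coset_rep_closed:
  assumes "subgroup H G" "x \<in> carrier G"
  shows "coset_rep G H x \<in> carrier G"
  using coset_rep_mem[OF assms] r_coset_subset_G[OF subgroup.subset[OF assms(1)] assms(2)] by blast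

lemma coset_rep_cong: "H #> x = H #> y \<Longrightarrow> coset_rep G H x = coset_rep G H y"
  unfolding coset_rep_def by simp

lemma rcos_coset_rep:
  assumes "subgroup H G" "x \<in> carrier G"
  shows "H #> coset_rep G H x = H #> x"
  using repr_independence[OF coset_rep_mem[OF assms] assms(2,1)] by simp

lemma coset_rep_idem:
  assumes "subgroup H G" "x \<in> carrier G"
  shows "coset_rep G H (coset_rep G H x) = coset_rep G H x"
  by (rule coset_rep_cong[OF rcos_coset_rep[OF assms]])

lemma coset_rep_subgroup:
  assumes "subgroup H G" "x \<in> H"
  shows "coset_rep G H x = \<one>"
  using subgroup.rcos_const[OF assms(1) is_group assms(2)] unfolding coset_rep_def by simp

lemma coset_rep_one: "subgroup H G \<Longrightarrow> coset_rep G H \<one> = \<one>"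
  using coset_rep_subgroup subgroup.one_closed by blast

lemma mult_inv_coset_rep:
  assumes "subgroup H G" "x \<in> carrier G"
  shows "x \<otimes> inv (coset_rep G H x) \<in> H"
proof -
  obtain h where h: "h \<in> H" "coset_rep G H x = h \<otimes> x"
    using coset_rep_mem[OF assms] unfolding r_coset_def by blast
  moreover have "h \<in> carrier G" using subgroup.mem_carrier[OF assms(1) h(1)] .
  ultimately have "x \<otimes> inv (coset_rep G H x) = inv h"
    using assms(2) by (simp add: inv_mult_group m_assoc[symmetric])
  then show ?thesis
    using h subgroup.m_inv_closed[OF assms(1)] by simp
qed

lemma finite_coset_reps:
  assumes "finite (rcosets H)"
  shows "finite (coset_rep G H ` carrier G)"
proof -
  have "coset_rep G H ` carrier G \<subseteq> (\<lambda>C. if C = H then \<one> else (SOME y. y \<in> C)) ` (rcosets H)"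
    unfolding coset_rep_def RCOSETS_def by auto
  then show ?thesis
    using assms finite_surj by blast
qed

definition schreier_generators :: "'a set \<Rightarrow> 'a set \<Rightarrow> 'a set" where
  "schreier_generators H \<Gamma> = (\<lambda>(t, \<gamma>). t \<otimes> \<gamma> \<otimes> inv (coset_rep G H (t \<otimes> \<gamma>))) `
      ((coset_rep G H ` carrier G) \<times> \<Gamma>)"

lemma schreier_generators_subset:
  assumes "subgroup H G" "\<Gamma> \<subseteq> carrier G"
  shows "schreier_generators H \<Gamma> \<subseteq> H"
  unfolding schreier_generators_def
  using assms coset_rep_closed mult_inv_coset_rep by auto

lemma schreier_rewriting:
  assumes H: "subgroup H G" and \<Gamma>: "\<Gamma> \<subseteq> carrier G" and g: "g \<in> generate G \<Gamma>"
  shows "\<forall>t\<in>coset_rep G H ` carrier G.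
           t \<otimes> g \<otimes> inv (coset_rep G H (t \<otimes> g)) \<in> generate G (schreier_generators H \<Gamma>)"
  using g
proof (induction rule: generate.induct)
  case one
  show ?case
    using H coset_rep_closed coset_rep_idem generate.one by auto
next
  case (incl \<gamma>)
  then show ?case
    unfolding schreier_generators_def by (auto intro!: generate.incl)
next
  case (inv \<gamma>)
  have \<gamma>: "\<gamma> \<in> carrier G" using inv \<Gamma> by blast
  show ?case
  proof
    fix t assume "t \<in> coset_rep G H ` carrier G"
    then obtain x where x: "x \<in> carrier G" "t = coset_rep G H x" by blast
    let ?s = "coset_rep G H (t \<otimes> inv \<gamma>)"
    have t: "t \<in> carrier G" using coset_rep_closed[OF H x(1)] x(2) by simp
    have s: "?s \<in> carrier G" using coset_rep_closed[OF H] t \<gamma> by simp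
    \<comment> \<open>the Schreier generator attached to the pair (s, gamma) is the inverse of the wanted element\<close>
    have "coset_rep G H (?s \<otimes> \<gamma>) = coset_rep G H (t \<otimes> inv \<gamma> \<otimes> \<gamma>)"
      using rcos_coset_rep[OF H] coset_mult_assoc subgroup.subset[OF H] t \<gamma> s
      by (intro coset_rep_cong) (metis inv_closed m_closed)
    also have "\<dots> = t"
      using t \<gamma> x coset_rep_idem[OF H x(1)] by (simp add: m_assoc)
    moreover have "?s \<in> coset_rep G H ` carrier G"
      using t \<gamma> by (blast intro: m_closed inv_closed)
    ultimately have "?s \<otimes> \<gamma> \<otimes> inv t \<in> schreier_generators H \<Gamma>"
      unfolding schreier_generators_def using inv by (intro image_eqI[of _ _ "(?s, \<gamma>)"]) auto
    then have "inv (?s \<otimes> \<gamma> \<otimes> inv t) \<in> generate G (schreier_generators H \<Gamma>)"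
      using schreier_generators_subset[OF H \<Gamma>] subgroup.subset[OF H]
      by (intro generate_m_inv_closed generate.incl) auto
    moreover have "inv (?s \<otimes> \<gamma> \<otimes> inv t) = t \<otimes> inv \<gamma> \<otimes> inv ?s"
      using s \<gamma> t by (simp add: inv_mult_group m_assoc)
    ultimately show "t \<otimes> inv \<gamma> \<otimes> inv (coset_rep G H (t \<otimes> inv \<gamma>)) \<in> generate G (schreier_generators H \<Gamma>)"
      by simp
  qed
next
  case (eng g h)
  have g: "g \<in> carrier G" and h: "h \<in> carrier G"
    using eng.hyps generate_in_carrier[OF \<Gamma>] by auto
  show ?case
  proof
    fix t assume tT: "t \<in> coset_rep G H ` carrier G"
    then have t: "t \<in> carrier G" using coset_rep_closed[OF H] by blast
    let ?t' = "coset_rep G H (t \<otimes> g)"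
    have t': "?t' \<in> carrier G" using coset_rep_closed[OF H] t g by simp
    have "coset_rep G H (?t' \<otimes> h) = coset_rep G H (t \<otimes> g \<otimes> h)"
      using rcos_coset_rep[OF H] coset_mult_assoc subgroup.subset[OF H] t g h t'
      by (intro coset_rep_cong) (metis m_closed)
    moreover have "?t' \<in> coset_rep G H ` carrier G" using t g by simp
    ultimately have "(t \<otimes> g \<otimes> inv ?t') \<otimes> (?t' \<otimes> h \<otimes> inv (coset_rep G H (t \<otimes> g \<otimes> h)))
        \<in> generate G (schreier_generators H \<Gamma>)"
      using eng.IH tT by (metis generate.eng)
    then show "t \<otimes> (g \<otimes> h) \<otimes> inv (coset_rep G H (t \<otimes> (g \<otimes> h))) \<in> generate G (schreier_generators H \<Gamma>)"
      using t g h t' coset_rep_closed[OF H] by (simp add: m_assoc)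
  qed
qed

theorem finitely_generated_finite_index_subgroup:
  assumes fg: "finitely_generated G" and H: "subgroup H G" and fin: "finite (rcosets H)"
  shows "finitely_generated (G\<lparr>carrier := H\<rparr>)"
proof -
  obtain \<Gamma> where \<Gamma>: "finite \<Gamma>" "\<Gamma> \<subseteq> carrier G" "generate G \<Gamma> = carrier G"
    using fg unfolding finitely_generated_def by blast
  let ?F = "schreier_generators H \<Gamma>"
  have F: "finite ?F" "?F \<subseteq> H"
    using finite_coset_reps[OF fin] \<Gamma>(1) schreier_generators_subset[OF H \<Gamma>(2)]
    by (auto simp: schreier_generators_def)
  have "v \<in> generate G ?F" if "v \<in> H" for v
    using schreier_rewriting[OF H \<Gamma>(2), of v] \<Gamma>(3) that subgroup.mem_carrier[OF H]
      coset_rep_one[OF H] coset_rep_subgroup[OF H that] by force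
  then have "generate G ?F = H"
    using generate_subgroup_incl[OF F(2) H] by blast
  then show ?thesis
    unfolding finitely_generated_def using generate_consistent[OF F(2) H] F by auto
qed

end

section \<open>The groups H_1(V, F_p)\<close>

lemma (in group) conj_nat_pow:
  assumes "x \<in> carrier G" "y \<in> carrier G"
  shows "x \<otimes> y [^] (n::nat) \<otimes> inv x = (x \<otimes> y \<otimes> inv x) [^] n"
proof (induction n)
  case (Suc n)
  have "x \<otimes> y [^] Suc n \<otimes> inv x = (x \<otimes> y [^] n \<otimes> inv x) \<otimes> (x \<otimes> y \<otimes> inv x)"
    using assms by (simp add: m_assoc)
  then show ?case using Suc by simp
qed (use assms in simp)

lemma (in monoid) nat_pow_mod:
  assumes "a \<in> carrier G" "a [^] (p::nat) = \<one>"
  shows "a [^] n = a [^] (n mod p)"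
proof -
  have "a [^] n = (a [^] p) [^] (n div p) \<otimes> a [^] (n mod p)"
    using assms(1) by (simp add: nat_pow_pow nat_pow_mult)
  then show ?thesis
    using assms by simp
qed

lemma (in comm_group) finite_generate_bounded_exponent:
  assumes p: "p > (0::nat)" and exp: "\<forall>x\<in>carrier G. x [^] p = \<one>"
    and "finite E" "E \<subseteq> carrier G"
  shows "finite (generate G E)"
  using assms(3,4)
proof (induction E rule: finite_induct)
  case empty
  then show ?case by (simp add: generate_empty)
next
  case (insert a E)
  then have a: "a \<in> carrier G" and E: "E \<subseteq> carrier G" by auto
  have a_pow_p: "a [^] p = \<one>" using exp a by blast
  have "x \<in> (\<lambda>(i, y). a [^] i \<otimes> y) ` ({..<p} \<times> generate G E)"
    if "x \<in> generate G (insert a E)" for x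
    using that
  proof (induction rule: generate.induct)
    case one
    then show ?case
      using p generate.one by (auto intro!: image_eqI[of _ _ "(0, \<one>)"])
  next
    case (incl h)
    show ?case
    proof (cases "h = a")
      case True
      have "a [^] (1 mod p) \<otimes> \<one> = a"
        using a a_pow_p nat_pow_mod[of a p 1] by simp
      then show ?thesis
        using True p generate.one by (auto intro!: image_eqI[of _ _ "(1 mod p, \<one>)"])
    next
      case False
      then show ?thesis
        using incl E p generate.incl[of h E G] by (auto intro!: image_eqI[of _ _ "(0, h)"])
    qed
  next
    case (inv h)
    show ?case
    proof (cases "h = a")
      case True
      have "a [^] (p - 1) \<otimes> a = \<one>"
        using a a_pow_p p by (simp add: nat_pow_Suc[symmetric])
      then have "inv a = a [^] (p - 1) \<otimes> \<one>" using a by (simp add: inv_equality)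
      then show ?thesis
        using True p generate.one by (auto intro!: image_eqI[of _ _ "(p - 1, \<one>)"])
    next
      case False
      then show ?thesis
        using inv E p generate.inv[of h E G] by (auto intro!: image_eqI[of _ _ "(0, inv h)"])
    qed
  next
    case (eng h1 h2)
    obtain n1 n2 :: nat and y1 y2 where h: "h1 = a [^] n1 \<otimes> y1" "h2 = a [^] n2 \<otimes> y2"
      and y: "y1 \<in> generate G E" "y2 \<in> generate G E"
      using eng.IH by (auto simp: image_iff)
    have "y1 \<in> carrier G" "y2 \<in> carrier G" using y generate_in_carrier[OF E] by auto
    then have "h1 \<otimes> h2 = a [^] ((n1 + n2) mod p) \<otimes> (y1 \<otimes> y2)"
      using h a nat_pow_mod[OF a a_pow_p, of "n1 + n2"] by (simp add: m_ac nat_pow_mult[symmetric])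
    then show ?case
      using generate.eng[OF y] p by (auto intro!: image_eqI[of _ _ "((n1 + n2) mod p, y1 \<otimes> y2)"])
  qed
  then show ?case
    using insert.IH[OF E] by (blast intro: finite_subset)
qed

context group
begin

lemma frattini_p_generators_subset:
  assumes "subgroup V G"
  shows "{x [^] (p::nat) | x. x \<in> V} \<union> {x \<otimes> y \<otimes> inv x \<otimes> inv y | x y. x \<in> V \<and> y \<in> V} \<subseteq> V"
proof -
  have "x [^] p \<in> V" if "x \<in> V" for x
    using monoid.nat_pow_closed[OF group.is_monoid[OF subgroup_imp_group[OF assms]], of x p] that
    by (simp add: nat_pow_consistent[symmetric])
  then show ?thesis
    by (auto intro!: subgroup.m_closed[OF assms] subgroup.m_inv_closed[OF assms])
qed

lemma subgroup_frattini_p: "subgroup V G \<Longrightarrow> subgroup (frattini_p G p V) G"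
  unfolding frattini_p_def
  using frattini_p_generators_subset subgroup.subset by (blast intro: generate_is_subgroup)

lemma pow_in_frattini_p: "x \<in> V \<Longrightarrow> x [^] p \<in> frattini_p G p V"
  unfolding frattini_p_def by (rule generate.incl) blast

lemma commutator_in_frattini_p:
  "x \<in> V \<Longrightarrow> y \<in> V \<Longrightarrow> x \<otimes> y \<otimes> inv x \<otimes> inv y \<in> frattini_p G p V"
  unfolding frattini_p_def by (rule generate.incl) blast

lemma frattini_p_mono: "V2 \<subseteq> V1 \<Longrightarrow> frattini_p G p V2 \<subseteq> frattini_p G p V1"
  unfolding frattini_p_def by (rule mono_generate) blast

lemma frattini_p_minimal:
  assumes "subgroup M G" "\<forall>x\<in>V. x [^] p \<in> M"
    and "\<forall>x\<in>V. \<forall>y\<in>V. x \<otimes> y \<otimes> inv x \<otimes> inv y \<in> M"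
  shows "frattini_p G p V \<subseteq> M"
  unfolding frattini_p_def by (rule generate_subgroup_incl[OF _ assms(1)]) (use assms(2,3) in blast)

lemma frattini_p_normal:
  assumes V: "subgroup V G"
  shows "frattini_p G p V \<lhd> G\<lparr>carrier := V\<rparr>"
proof -
  interpret V: group "G\<lparr>carrier := V\<rparr>" by (rule subgroup_imp_group[OF V])
  let ?gens = "{x [^] p | x. x \<in> V} \<union> {x \<otimes> y \<otimes> inv x \<otimes> inv y | x y. x \<in> V \<and> y \<in> V}"
  have VG: "V \<subseteq> carrier G" using subgroup.subset[OF V] .
  have conj: "c \<otimes> y \<otimes> inv c \<in> V" if "c \<in> V" "y \<in> V" for c y
    using that subgroup.m_closed[OF V] subgroup.m_inv_closed[OF V] by blast
  have "c \<otimes> g \<otimes> inv c \<in> ?gens" if g: "g \<in> ?gens" and c: "c \<in> V" for g c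
  proof -
    have cG: "c \<in> carrier G" using c VG by blast
    from g consider (pow) y where "y \<in> V" "g = y [^] p"
      | (comm) a b where "a \<in> V" "b \<in> V" "g = a \<otimes> b \<otimes> inv a \<otimes> inv b"
      by blast
    then show ?thesis
    proof cases
      case pow
      then show ?thesis
        using conj_nat_pow[OF cG] conj[OF c] VG by blast
    next
      case comm
      then have "c \<otimes> g \<otimes> inv c = (c \<otimes> a \<otimes> inv c) \<otimes> (c \<otimes> b \<otimes> inv c)
          \<otimes> inv (c \<otimes> a \<otimes> inv c) \<otimes> inv (c \<otimes> b \<otimes> inv c)"
        using cG VG by (simp add: subset_iff m_assoc inv_mult_group)
      then show ?thesis
        using comm conj[OF c] by blast
    qed
  qed
  moreover have "?gens \<subseteq> V" by (rule frattini_p_generators_subset[OF V])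
  ultimately have "generate (G\<lparr>carrier := V\<rparr>) ?gens \<lhd> G\<lparr>carrier := V\<rparr>"
    by (intro V.normal_generateI) (auto simp: m_inv_consistent[OF V])
  then show ?thesis
    unfolding frattini_p_def using generate_consistent[OF frattini_p_generators_subset[OF V, where p=p] V]
    by simp
qed

lemma carrier_H1_mod_p: "carrier (H1_mod_p G p V) = (\<lambda>x. frattini_p G p V #> x) ` V"
  unfolding H1_mod_p_def FactGroup_def RCOSETS_def by auto

lemma H1_mod_p_mult:
  assumes "subgroup V G" "x \<in> V" "y \<in> V"
  shows "(frattini_p G p V #> x) \<otimes>\<^bsub>H1_mod_p G p V\<^esub> (frattini_p G p V #> y)
       = frattini_p G p V #> (x \<otimes> y)"
proof -
  interpret N: normal "frattini_p G p V" "G\<lparr>carrier := V\<rparr>" by (rule frattini_p_normal[OF assms(1)])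
  show ?thesis
    using N.rcos_sum[of x y] assms(2,3) by (simp add: H1_mod_p_def)
qed

lemma rcos_mult_absorb:
  assumes "subgroup K G" "c \<in> K" "z \<in> carrier G"
  shows "K #> (c \<otimes> z) = K #> z"
  using coset_mult_assoc[OF subgroup.subset[OF assms(1)] subgroup.mem_carrier[OF assms(1,2)] assms(3)]
    subgroup.rcos_const[OF assms(1) is_group assms(2)] by simp

lemma comm_group_H1_mod_p:
  assumes V: "subgroup V G"
  shows "comm_group (H1_mod_p G p V)"
proof -
  interpret N: normal "frattini_p G p V" "G\<lparr>carrier := V\<rparr>" by (rule frattini_p_normal[OF V])
  let ?\<Phi> = "frattini_p G p V"
  show ?thesis
    unfolding H1_mod_p_def
  proof (rule group.group_comm_groupI[OF N.factorgroup_is_group])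
    fix C D assume "C \<in> carrier (G\<lparr>carrier := V\<rparr> Mod ?\<Phi>)" "D \<in> carrier (G\<lparr>carrier := V\<rparr> Mod ?\<Phi>)"
    then obtain x y where xy: "x \<in> V" "y \<in> V" "C = ?\<Phi> #> x" "D = ?\<Phi> #> y"
      using carrier_H1_mod_p unfolding H1_mod_p_def by auto
    then have G: "x \<in> carrier G" "y \<in> carrier G" using subgroup.mem_carrier[OF V] by auto
    have "?\<Phi> #> (x \<otimes> y) = ?\<Phi> #> ((x \<otimes> y \<otimes> inv x \<otimes> inv y) \<otimes> (y \<otimes> x))"
      using G by (simp add: m_assoc)
    also have "\<dots> = ?\<Phi> #> (y \<otimes> x)"
      using rcos_mult_absorb[OF subgroup_frattini_p[OF V] commutator_in_frattini_p[OF xy(1,2)]] G by simp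
    finally show "C \<otimes>\<^bsub>G\<lparr>carrier := V\<rparr> Mod ?\<Phi>\<^esub> D = D \<otimes>\<^bsub>G\<lparr>carrier := V\<rparr> Mod ?\<Phi>\<^esub> C"
      using H1_mod_p_mult[OF V] xy unfolding H1_mod_p_def by simp
  qed
qed

lemma H1_mod_p_exponent:
  assumes V: "subgroup V G" and q: "q \<in> carrier (H1_mod_p G p V)"
  shows "q [^]\<^bsub>H1_mod_p G p V\<^esub> p = \<one>\<^bsub>H1_mod_p G p V\<^esub>"
proof -
  interpret N: normal "frattini_p G p V" "G\<lparr>carrier := V\<rparr>" by (rule frattini_p_normal[OF V])
  obtain x where x: "x \<in> V" "q = frattini_p G p V #> x"
    using q carrier_H1_mod_p by auto
  have "q [^]\<^bsub>H1_mod_p G p V\<^esub> p = frattini_p G p V #> (x [^] p)"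
    using N.FactGroup_pow[of x p] x by (simp add: H1_mod_p_def nat_pow_consistent[symmetric])
  also have "\<dots> = frattini_p G p V"
    using subgroup.rcos_const[OF subgroup_frattini_p[OF V] is_group pow_in_frattini_p[OF x(1)]] .
  finally show ?thesis
    by (simp add: H1_mod_p_def)
qed

lemma finite_H1_mod_p:
  assumes V: "subgroup V G" and fg: "finitely_generated (G\<lparr>carrier := V\<rparr>)" and p: "p > 0"
  shows "finite (carrier (H1_mod_p G p V))"
proof -
  interpret N: normal "frattini_p G p V" "G\<lparr>carrier := V\<rparr>" by (rule frattini_p_normal[OF V])
  interpret Q: comm_group "H1_mod_p G p V" by (rule comm_group_H1_mod_p[OF V])
  interpret group_hom "G\<lparr>carrier := V\<rparr>" "H1_mod_p G p V" "\<lambda>x. frattini_p G p V #> x"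
    using N.r_coset_hom_Mod N.group_axioms Q.group_axioms
    by (simp add: group_hom_def group_hom_axioms_def H1_mod_p_def)
  have "finitely_generated (H1_mod_p G p V)"
    using finitely_generated_image[OF fg] carrier_H1_mod_p by simp
  then obtain \<Gamma> where "finite \<Gamma>" "\<Gamma> \<subseteq> carrier (H1_mod_p G p V)"
    "generate (H1_mod_p G p V) \<Gamma> = carrier (H1_mod_p G p V)"
    unfolding finitely_generated_def by blast
  then show ?thesis
    using Q.finite_generate_bounded_exponent[OF p] H1_mod_p_exponent[OF V] by metis
qed

end

section \<open>Finite p-groups and normal subgroups of p-power index\<close>

lemma (in group_action) prime_dvd_card_fixed_points:
  assumes p: "Factorial_Ring.prime (p::nat)" and ord: "order G = p ^ k" and fin: "finite E" and dvd: "p dvd card E"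
  shows "p dvd card {x \<in> E. \<forall>g\<in>carrier G. \<phi> g x = x}"
proof -
  let ?F = "{x \<in> E. \<forall>g\<in>carrier G. \<phi> g x = x}" and ?O = "orbits G E \<phi>"
  define O1 where "O1 = {orb \<in> ?O. card orb = 1}"
  have finO: "finite ?O"
    using fin finite_Collect_subsets[OF fin]
    by (rule_tac finite_subset[of _ "Pow E"]) (auto simp: orbits_def orbit_def element_image)
  have p_dvd_orbit: "p dvd card orb" if orb: "orb \<in> ?O - O1" for orb
  proof -
    obtain x where x: "x \<in> E" "orb = orbit G \<phi> x" using orb unfolding orbits_def by blast
    have "card orb dvd p ^ k"
      using orbit_stabilizer_theorem[OF x(1)] ord x(2) by (metis dvd_triv_left)
    then obtain j where "card orb = p ^ j" using divides_primepow_nat[OF p] by blast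
    then show ?thesis using orb unfolding O1_def by (cases j) auto
  qed
  have O1: "O1 = (\<lambda>x. {x}) ` ?F"
  proof (intro equalityI subsetI)
    fix orb assume "orb \<in> O1"
    then obtain x where x: "x \<in> E" "orb = orbit G \<phi> x" "card orb = 1"
      unfolding O1_def orbits_def by blast
    then have "orb = {x}" using orbit_refl[OF x(1)] by (metis card_1_singletonE singletonD)
    then have "x \<in> ?F" using x unfolding orbit_def by blast
    then show "orb \<in> (\<lambda>x. {x}) ` ?F" using \<open>orb = {x}\<close> by blast
  next
    fix orb assume "orb \<in> (\<lambda>x. {x}) ` ?F"
    then obtain x where x: "x \<in> ?F" "orb = {x}" by blast
    then have "orbit G \<phi> x = {x}"
      using orbit_refl[of x] unfolding orbit_def by auto
    then show "orb \<in> O1" using x unfolding O1_def orbits_def by auto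
  qed
  have "card E = (\<Sum>orb\<in>?O. card orb)"
    using disjoint_sum[OF fin, of "\<lambda>_. 1::nat"] by simp
  also have "\<dots> = card O1 + (\<Sum>orb\<in>?O - O1. card orb)"
    using sum.subset_diff[of O1 ?O card] finO unfolding O1_def by simp
  finally have "p dvd card O1"
    using dvd dvd_sum[of "?O - O1" p card] p_dvd_orbit by (metis dvd_add_left_iff)
  moreover have "card O1 = card ?F"
    unfolding O1 by (rule card_image) (simp add: inj_on_def)
  ultimately show ?thesis by simp
qed

context group
begin

lemma prime_power_order_center_nontrivial:
  assumes p: "Factorial_Ring.prime (p::nat)" and ord: "order G = p ^ k" and k: "k \<ge> 1"
  shows "\<exists>z\<in>carrier G. z \<noteq> \<one> \<and> (\<forall>x\<in>carrier G. x \<otimes> z = z \<otimes> x)"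
proof -
  interpret conj: group_action G "carrier G" "\<lambda>g. \<lambda>h\<in>carrier G. g \<otimes> h \<otimes> inv g"
    by (rule action_by_conjugation)
  let ?Z = "{z \<in> carrier G. \<forall>g\<in>carrier G. (\<lambda>h\<in>carrier G. g \<otimes> h \<otimes> inv g) z = z}"
  have p1: "p > 1" using prime_gt_1_nat[OF p] .
  then have fin: "finite (carrier G)" using ord order_gt_0_iff_finite by force
  have "p dvd card (carrier G)" using ord k by (simp add: order_def dvd_power)
  then have "p dvd card ?Z"
    using conj.prime_dvd_card_fixed_points[OF p ord fin] by blast
  moreover have "\<one> \<in> ?Z" by simp
  ultimately have "card ?Z \<ge> p"
    using fin by (intro dvd_imp_le) (auto simp: card_gt_0_iff)
  moreover have "card ?Z \<le> 1" if "?Z \<subseteq> {\<one>}"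
    using card_mono[OF _ that] by simp
  ultimately have "\<not> ?Z \<subseteq> {\<one>}"
    using p1 by linarith
  then obtain z where "z \<in> ?Z" "z \<noteq> \<one>" by blast
  moreover have "x \<otimes> z = z \<otimes> x" if z: "z \<in> ?Z" and x: "x \<in> carrier G" for x
  proof -
    have "x \<otimes> z = (x \<otimes> z \<otimes> inv x) \<otimes> x" using z x by (simp add: m_assoc)
    moreover have "x \<otimes> z \<otimes> inv x = z" using z x by auto
    ultimately show ?thesis by simp
  qed
  ultimately show ?thesis by blast
qed

lemma commutator_eq_one:
  "x \<in> carrier G \<Longrightarrow> y \<in> carrier G \<Longrightarrow> x \<otimes> y = y \<otimes> x \<Longrightarrow> x \<otimes> y \<otimes> inv x \<otimes> inv y = \<one>"
  by (simp add: m_assoc)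

lemma central_element_of_order_p:
  assumes p: "Factorial_Ring.prime (p::nat)" and ord: "order G = p ^ k" and k: "k \<ge> 1"
  shows "\<exists>y\<in>carrier G. y \<noteq> \<one> \<and> y [^] p = \<one> \<and> (\<forall>x\<in>carrier G. x \<otimes> y = y \<otimes> x)"
proof -
  obtain z where z: "z \<in> carrier G" "z \<noteq> \<one>" "\<forall>x\<in>carrier G. x \<otimes> z = z \<otimes> x"
    using prime_power_order_center_nontrivial[OF p ord k] by blast
  have "ord z dvd p ^ k" using ord_dvd_group_order[OF z(1)] ord by simp
  then obtain m where m: "ord z = p ^ m" using divides_primepow_nat[OF p] by blast
  have "m \<noteq> 0" using m ord_eq_1[OF z(1)] z(2) by auto
  then obtain m' where m': "m = Suc m'" using not0_implies_Suc by blast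
  \<comment> \<open>a suitable power of z has order exactly p\<close>
  define y where "y = z [^] (p ^ m')"
  have "y [^] p = z [^] ord z"
    unfolding y_def using z(1) m m' by (simp add: nat_pow_pow mult.commute)
  then have "y [^] p = \<one>" using z(1) by simp
  moreover have "\<not> ord z dvd p ^ m'"
    using m m' prime_gt_1_nat[OF p] by (auto dest!: dvd_imp_le)
  then have "y \<noteq> \<one>" unfolding y_def using pow_eq_id[OF z(1)] by simp
  moreover have "x \<otimes> y = y \<otimes> x" if x: "x \<in> carrier G" for x
    unfolding y_def using group_commutes_pow[where x=z and y=x and n="p ^ m'"] z x by simp
  moreover have "y \<in> carrier G" unfolding y_def using z(1) by simp
  ultimately show ?thesis by blast
qed

lemma central_cyclic_normal:
  assumes y: "y \<in> carrier G" "y [^] p = \<one>" "p > (0::nat)" and central: "\<forall>x\<in>carrier G. x \<otimes> y = y \<otimes> x"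
  shows "{y [^] i | i::nat. True} \<lhd> G"
proof -
  let ?Z = "{y [^] i | i::nat. True}"
  have "subgroup ?Z G"
  proof
    show "?Z \<subseteq> carrier G" using y(1) by auto
    have "y [^] (0::nat) \<in> ?Z" by blast
    then show "\<one> \<in> ?Z" by simp
  next
    fix a b assume "a \<in> ?Z" "b \<in> ?Z"
    then obtain i k where "a = y [^] (i::nat)" "b = y [^] (k::nat)" by blast
    then have "a \<otimes> b = y [^] (i + k)" using y(1) by (simp add: nat_pow_mult)
    then show "a \<otimes> b \<in> ?Z" by blast
  next
    fix a assume "a \<in> ?Z"
    then obtain i where i: "a = y [^] (i::nat)" by blast
    have "y [^] ((p - 1) * i) \<otimes> a = y [^] ((p - 1) * i + i)"
      using i y(1) by (simp add: nat_pow_mult)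
    also have "(p - 1) * i + i = p * i" using y(3) by (simp add: algebra_simps)
    also have "y [^] (p * i) = \<one>" using y(1,2) nat_pow_pow[of y p i] by simp
    finally have "inv a = y [^] ((p - 1) * i)"
      using i y(1) by (intro inv_equality) simp_all
    then show "inv a \<in> ?Z" by blast
  qed
  then show ?thesis
  proof (rule normal_invI)
    fix g a assume g: "g \<in> carrier G" and "a \<in> ?Z"
    then obtain i where i: "a = y [^] (i::nat)" by blast
    have "g \<otimes> a = a \<otimes> g"
      using group_commutes_pow[where x=y and y=g and n=i] central g y(1) i by simp
    then have "g \<otimes> a \<otimes> inv g = a"
      using g i y(1) by (simp add: m_assoc)
    then show "g \<otimes> a \<otimes> inv g \<in> ?Z" using i by blast
  qed
qed

end

lemma (in group) set_mult_rcos_absorb: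
  assumes H: "subgroup H G" and KH: "K \<subseteq> H" and K: "\<one> \<in> K" and x: "x \<in> carrier G"
  shows "H <#> (K #> x) = H #> x"
proof -
  have HG: "H \<subseteq> carrier G" using subgroup.subset[OF H] .
  have "H <#> K = H"
  proof
    show "H <#> K \<subseteq> H"
      unfolding set_mult_def using KH subgroup.m_closed[OF H] by blast
    show "H \<subseteq> H <#> K"
    proof
      fix h assume "h \<in> H"
      then have "h = h \<otimes> \<one>" using HG by auto
      then show "h \<in> H <#> K" unfolding set_mult_def using \<open>h \<in> H\<close> K by blast
    qed
  qed
  then show ?thesis using setmult_rcos_assoc[OF HG _ x] KH HG by auto
qed

lemma (in group) rcosets_eq_image_set_mult:
  assumes M: "subgroup M G" and N: "subgroup N G" and NM: "N \<subseteq> M"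
  shows "rcosets M = (\<lambda>C. M <#> C) ` (rcosets N)"
proof -
  have "M #> x = M <#> (N #> x)" if "x \<in> carrier G" for x
    using set_mult_rcos_absorb[OF M NM subgroup.one_closed[OF N] that] by simp
  then show ?thesis
    unfolding RCOSETS_def by (auto simp: image_UN)
qed

lemma (in group) index_dvd_index:
  assumes M: "M \<lhd> G" and N: "N \<lhd> G" and NM: "N \<subseteq> M" and fin: "finite (rcosets N)"
  shows "card (rcosets M) dvd card (rcosets N)"
proof -
  interpret M: normal M G by (rule M)
  interpret N: normal N G by (rule N)
  let ?\<pi> = "\<lambda>C. M <#> C"
  have eq: "?\<pi> (N #> x) = M #> x" if "x \<in> carrier G" for x
    using set_mult_rcos_absorb[OF M.subgroup_axioms NM N.one_closed that] .
  have "?\<pi> \<in> hom (G Mod N) (G Mod M)"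
  proof (rule homI)
    fix C assume "C \<in> carrier (G Mod N)"
    then show "?\<pi> C \<in> carrier (G Mod M)"
      using eq unfolding FactGroup_def RCOSETS_def by auto
  next
    fix C D assume "C \<in> carrier (G Mod N)" "D \<in> carrier (G Mod N)"
    then obtain x y where "x \<in> carrier G" "y \<in> carrier G" "C = N #> x" "D = N #> y"
      unfolding FactGroup_def RCOSETS_def by auto
    then show "?\<pi> (C \<otimes>\<^bsub>G Mod N\<^esub> D) = ?\<pi> C \<otimes>\<^bsub>G Mod M\<^esub> ?\<pi> D"
      using eq N.rcos_sum M.rcos_sum by simp
  qed
  then interpret \<pi>: group_hom "G Mod N" "G Mod M" ?\<pi>
    using N.factorgroup_is_group M.factorgroup_is_group by (simp add: group_hom_def group_hom_axioms_def)
  have "?\<pi> ` carrier (G Mod N) = carrier (G Mod M)"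
    using rcosets_eq_image_set_mult[OF M.subgroup_axioms N.subgroup_axioms NM]
    by (simp add: FactGroup_def)
  then have "card (carrier (G Mod N Mod kernel (G Mod N) (G Mod M) ?\<pi>)) = card (carrier (G Mod M))"
    using \<pi>.FactGroup_iso_set bij_betw_same_card unfolding iso_def by blast
  moreover have "card (rcosets\<^bsub>G Mod N\<^esub> kernel (G Mod N) (G Mod M) ?\<pi>)
      * card (kernel (G Mod N) (G Mod M) ?\<pi>) = order (G Mod N)"
    using group.lagrange[OF N.factorgroup_is_group \<pi>.subgroup_kernel] .
  ultimately have "card (carrier (G Mod M)) dvd order (G Mod N)"
    by (metis FactGroup_def dvd_triv_left monoid.select_convs(1) partial_object.select_convs(1))
  then show ?thesis
    unfolding order_def by (simp add: FactGroup_def)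
qed

lemma (in group) index_less_of_proper_subgroup:
  assumes H: "subgroup H G" and H': "subgroup H' G" and HH': "H \<subseteq> H'"
    and a: "a \<in> H'" "a \<notin> H" and fin: "finite (rcosets H)"
  shows "card (rcosets H') < card (rcosets H)"
proof -
  have aG: "a \<in> carrier G" using a(1) subgroup.subset[OF H'] by blast
  have H1: "\<one> \<in> H" by (rule subgroup.one_closed[OF H])
  \<comment> \<open>the map from cosets of H onto cosets of H' identifies H #> a with H\<close>
  have "H' <#> (H #> a) = H'"
    using set_mult_rcos_absorb[OF H' HH' H1 aG] coset_join2[OF aG H' a(1)] by simp
  moreover have "H' <#> H = H'"
    using set_mult_rcos_absorb[OF H' HH' H1 one_closed] coset_mult_one subgroup.subset H H' by metis
  moreover have "H #> a \<noteq> H" using coset_join1[OF _ aG H] a(2) by blast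
  moreover have "H #> a \<in> rcosets H" "H \<in> rcosets H"
    using aG H subgroup.subset by (auto intro: rcosetsI subgroup.subgroup_in_rcosets[OF H is_group])
  ultimately have "\<not> inj_on (\<lambda>C. H' <#> C) (rcosets H)"
    unfolding inj_on_def by blast
  then have "card ((\<lambda>C. H' <#> C) ` (rcosets H)) < card (rcosets H)"
    using fin card_image_le inj_on_iff_eq_card le_neq_implies_less by metis
  then show ?thesis
    using rcosets_eq_image_set_mult[OF H' H HH'] by simp
qed

lemma (in normal) elementary_abelian_of_cyclic_image:
  assumes y: "y \<in> carrier (G Mod H)" "y [^]\<^bsub>G Mod H\<^esub> (p::nat) = \<one>\<^bsub>G Mod H\<^esub>"
    and K: "\<forall>x\<in>K. x \<in> carrier G \<and> (\<exists>i::nat. H #> x = y [^]\<^bsub>G Mod H\<^esub> i)"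
  shows "\<forall>x\<in>K. x [^] p \<in> H" and "\<forall>x\<in>K. \<forall>z\<in>K. x \<otimes> z \<otimes> inv x \<otimes> inv z \<in> H"
proof -
  let ?Q = "G Mod H" and ?\<pi> = "\<lambda>x. H #> x"
  interpret Q: group ?Q by (rule factorgroup_is_group)
  interpret \<pi>: group_hom G ?Q ?\<pi>
    using r_coset_hom_Mod Q.group_axioms by (simp add: group_hom_def group_hom_axioms_def is_group)
  have in_H: "x \<in> H" if "x \<in> carrier G" "?\<pi> x = \<one>\<^bsub>?Q\<^esub>" for x
    using coset_join1[OF _ that(1) subgroup_axioms] that(2) by simp
  show "\<forall>x\<in>K. x [^] p \<in> H"
  proof
    fix x assume "x \<in> K"
    then obtain i where x: "x \<in> carrier G" "?\<pi> x = y [^]\<^bsub>?Q\<^esub> (i::nat)" using K by blast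
    then have "?\<pi> (x [^] p) = (y [^]\<^bsub>?Q\<^esub> p) [^]\<^bsub>?Q\<^esub> i"
      using FactGroup_pow[OF x(1), of p] y(1) by (simp add: Q.nat_pow_pow mult.commute)
    then show "x [^] p \<in> H" using in_H x(1) y(2) Q.nat_pow_one[of i] by simp
  qed
  show "\<forall>x\<in>K. \<forall>z\<in>K. x \<otimes> z \<otimes> inv x \<otimes> inv z \<in> H"
  proof (intro ballI)
    fix x z assume "x \<in> K" "z \<in> K"
    then obtain i k where x: "x \<in> carrier G" "?\<pi> x = y [^]\<^bsub>?Q\<^esub> (i::nat)"
      and z: "z \<in> carrier G" "?\<pi> z = y [^]\<^bsub>?Q\<^esub> (k::nat)"
      using K by blast
    have "?\<pi> x \<otimes>\<^bsub>?Q\<^esub> ?\<pi> z = ?\<pi> z \<otimes>\<^bsub>?Q\<^esub> ?\<pi> x"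
      unfolding x(2) z(2) using Q.nat_pow_mult[OF y(1)] by (metis add.commute)
    moreover have "?\<pi> (x \<otimes> z \<otimes> inv x \<otimes> inv z)
        = ?\<pi> x \<otimes>\<^bsub>?Q\<^esub> ?\<pi> z \<otimes>\<^bsub>?Q\<^esub> inv\<^bsub>?Q\<^esub> ?\<pi> x \<otimes>\<^bsub>?Q\<^esub> inv\<^bsub>?Q\<^esub> ?\<pi> z"
      using x(1) z(1) by (simp only: \<pi>.hom_mult \<pi>.hom_inv m_closed inv_closed)
    ultimately have "?\<pi> (x \<otimes> z \<otimes> inv x \<otimes> inv z) = \<one>\<^bsub>?Q\<^esub>"
      using Q.commutator_eq_one \<pi>.hom_closed x(1) z(1) by metis
    then show "x \<otimes> z \<otimes> inv x \<otimes> inv z \<in> H" using in_H x(1) z(1) by simp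
  qed
qed

lemma (in normal) prime_power_index_extension:
  assumes p: "Factorial_Ring.prime p" and index: "card (rcosets H) = p ^ j" and proper: "H \<noteq> carrier G"
  shows "\<exists>H'. H' \<lhd> G \<and> H \<subseteq> H' \<and> card (rcosets H') < card (rcosets H) \<and>
           (\<forall>x\<in>H'. x [^] p \<in> H) \<and> (\<forall>x\<in>H'. \<forall>y\<in>H'. x \<otimes> y \<otimes> inv x \<otimes> inv y \<in> H)"
proof -
  let ?Q = "G Mod H"
  interpret Q: group ?Q by (rule factorgroup_is_group)
  have ordQ: "order ?Q = p ^ j" using index by (simp add: order_def FactGroup_def)
  have "j \<ge> 1"
  proof (rule ccontr)
    assume "\<not> j \<ge> 1"
    then have "carrier ?Q = {\<one>\<^bsub>?Q\<^esub>}" using ordQ Q.order_one_triv_iff by simp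
    then have "H #> x = H" if "x \<in> carrier G" for x
      using that unfolding FactGroup_def RCOSETS_def by auto
    then have "carrier G \<subseteq> H" using coset_join1[OF _ _ subgroup_axioms] by auto
    then show False using proper subset by auto
  qed
  then obtain y where y: "y \<in> carrier ?Q" "y \<noteq> \<one>\<^bsub>?Q\<^esub>" "y [^]\<^bsub>?Q\<^esub> p = \<one>\<^bsub>?Q\<^esub>"
      "\<forall>x\<in>carrier ?Q. x \<otimes>\<^bsub>?Q\<^esub> y = y \<otimes>\<^bsub>?Q\<^esub> x"
    using Q.central_element_of_order_p[OF p ordQ] by blast
  let ?Z = "{y [^]\<^bsub>?Q\<^esub> i | i::nat. True}"
  have Z: "?Z \<lhd> ?Q"
    using Q.central_cyclic_normal[OF y(1,3) _ y(4)] prime_gt_0_nat[OF p] by blast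
  \<comment> \<open>H' is the preimage of the central subgroup of order p generated by y\<close>
  define H' where "H' = \<Union>?Z"
  have H': "H' \<lhd> G" unfolding H'_def by (rule factgroup_subgroup_union_normal[OF Z])
  have H'_char: "H' = {x \<in> carrier G. H #> x \<in> ?Z}"
    unfolding H'_def by (rule factgroup_subgroup_union_char[OF normal_imp_subgroup[OF Z]])
  have "y [^]\<^bsub>?Q\<^esub> (0::nat) \<in> ?Z" "y [^]\<^bsub>?Q\<^esub> (1::nat) \<in> ?Z" by blast+
  then have H_Z: "H \<in> ?Z" and y_Z: "y \<in> ?Z"
    using Q.nat_pow_0[of y] Q.nat_pow_eone[OF y(1)] by (simp_all only: one_FactGroup)
  have HH': "H \<subseteq> H'"
  proof
    fix x assume "x \<in> H"
    then have "x \<in> carrier G" "H #> x = H" using coset_join2[OF _ subgroup_axioms] subset by auto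
    then show "x \<in> H'" using H'_char H_Z by blast
  qed
  obtain a where a: "a \<in> carrier G" "y = H #> a"
    using y(1) unfolding FactGroup_def RCOSETS_def by auto
  have "a \<in> H'" using a H'_char y_Z by simp
  moreover have "a \<notin> H"
  proof
    assume "a \<in> H"
    then have "H #> a = H" using coset_join2[OF a(1) subgroup_axioms] by simp
    then show False using a(2) y(2) by simp
  qed
  moreover have "finite (rcosets H)"
    using index prime_gt_0_nat[OF p] card_gt_0_iff by fastforce
  ultimately have less: "card (rcosets H') < card (rcosets H)"
    by (rule index_less_of_proper_subgroup[OF subgroup_axioms normal_imp_subgroup[OF H'] HH'])
  have "\<forall>x\<in>H'. x \<in> carrier G \<and> (\<exists>i::nat. H #> x = y [^]\<^bsub>?Q\<^esub> i)"
    using H'_char by blast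
  note elementary = elementary_abelian_of_cyclic_image[OF y(1,3) this]
  show ?thesis
    using H' HH' less elementary by blast
qed

section \<open>Inverse limits of finite sets\<close>

definition inverse_subsystem ::
    "'i::order set \<Rightarrow> ('i \<Rightarrow> 'x set) \<Rightarrow> ('i \<Rightarrow> 'i \<Rightarrow> 'x \<Rightarrow> 'x) \<Rightarrow> ('i \<Rightarrow> 'x set) \<Rightarrow> bool" where
  "inverse_subsystem I Xs f Y \<longleftrightarrow>
     (\<forall>i\<in>I. Y i \<subseteq> Xs i \<and> Y i \<noteq> {} \<and> (\<forall>j\<in>I. j \<le> i \<longrightarrow> (\<forall>x\<in>Y j. f i j x \<in> Y i)))"

lemma inverse_subsystem_cong:
  "inverse_subsystem I Xs f Y \<Longrightarrow> \<forall>i\<in>I. Y' i = Y i \<Longrightarrow> inverse_subsystem I Xs f Y'"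
  unfolding inverse_subsystem_def by simp

text \<open>A subsystem is encoded by the set of pairs (i, x) it omits, turning minimal into maximal.\<close>
definition omitting :: "('i \<Rightarrow> 'x set) \<Rightarrow> ('i \<times> 'x) set \<Rightarrow> 'i \<Rightarrow> 'x set" where
  "omitting Xs Z i = {x \<in> Xs i. (i, x) \<notin> Z}"

lemma inverse_subsystem_omitting_Union_chain:
  fixes I :: "'i::order set" and Xs :: "'i \<Rightarrow> 'x set"
  assumes fin: "\<And>i. i \<in> I \<Longrightarrow> finite (Xs i)" and Xs: "inverse_subsystem I Xs f Xs"
    and ne: "\<C> \<noteq> {}" and chain: "subset.chain \<A> \<C>"
    and sub: "\<forall>Z\<in>\<C>. inverse_subsystem I Xs f (omitting Xs Z)"
  shows "inverse_subsystem I Xs f (omitting Xs (\<Union>\<C>))"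
  unfolding inverse_subsystem_def
proof (intro ballI conjI impI)
  fix i assume i: "i \<in> I"
  show "omitting Xs (\<Union>\<C>) i \<subseteq> Xs i" unfolding omitting_def by blast
  \<comment> \<open>over a single finite fibre the chain stabilises\<close>
  obtain Z0 where Z0: "Z0 \<in> \<C>" "({i} \<times> Xs i) \<inter> \<Union>\<C> \<subseteq> Z0"
    using finite_subset_Union_chain[of "({i} \<times> Xs i) \<inter> \<Union>\<C>" \<C> \<A>] fin[OF i] ne chain by blast
  then have "omitting Xs (\<Union>\<C>) i = omitting Xs Z0 i" unfolding omitting_def by blast
  then show "omitting Xs (\<Union>\<C>) i \<noteq> {}"
    using sub Z0(1) i unfolding inverse_subsystem_def by simp
next
  fix i j x assume ij: "i \<in> I" "j \<in> I" "j \<le> i" and x: "x \<in> omitting Xs (\<Union>\<C>) j"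
  have "f i j x \<in> omitting Xs Z i" if Z: "Z \<in> \<C>" for Z
  proof -
    have "x \<in> omitting Xs Z j" using x Z unfolding omitting_def by blast
    then show ?thesis using sub Z ij unfolding inverse_subsystem_def by blast
  qed
  moreover have "f i j x \<in> Xs i"
    using x Xs ij unfolding inverse_subsystem_def omitting_def by blast
  ultimately show "f i j x \<in> omitting Xs (\<Union>\<C>) i" unfolding omitting_def by blast
qed

lemma minimal_inverse_subsystem_exists:
  fixes I :: "'i::order set" and Xs :: "'i \<Rightarrow> 'x set"
  assumes fin: "\<And>i. i \<in> I \<Longrightarrow> finite (Xs i)" and Xs: "inverse_subsystem I Xs f Xs"
  shows "\<exists>Y. inverse_subsystem I Xs f Y \<and>
           (\<forall>Y'. inverse_subsystem I Xs f Y' \<longrightarrow> (\<forall>i\<in>I. Y' i \<subseteq> Y i) \<longrightarrow> (\<forall>i\<in>I. Y' i = Y i))"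
proof -
  define \<A> where "\<A> = {Z. Z \<subseteq> Sigma I Xs \<and> inverse_subsystem I Xs f (omitting Xs Z)}"
  have "\<Union>\<C> \<in> \<A>" if \<C>: "subset.chain \<A> \<C>" for \<C>
  proof (cases "\<C> = {}")
    case True
    then show ?thesis using Xs unfolding \<A>_def omitting_def by simp
  next
    case False
    have "\<C> \<subseteq> \<A>" using \<C> by (simp add: subset_chain_def)
    then have "inverse_subsystem I Xs f (omitting Xs (\<Union>\<C>))" "\<Union>\<C> \<subseteq> Sigma I Xs"
      using inverse_subsystem_omitting_Union_chain[OF fin Xs False \<C>] unfolding \<A>_def by blast+
    then show ?thesis unfolding \<A>_def by blast
  qed
  then have "\<exists>M\<in>\<A>. \<forall>Z\<in>\<A>. M \<subseteq> Z \<longrightarrow> Z = M"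
    by (rule subset_Zorn')
  then obtain M where M: "M \<in> \<A>" and max: "\<forall>Z\<in>\<A>. M \<subseteq> Z \<longrightarrow> Z = M"
    by blast
  show ?thesis
  proof (intro exI[of _ "omitting Xs M"] conjI allI impI)
    show "inverse_subsystem I Xs f (omitting Xs M)" using M unfolding \<A>_def by blast
    fix Y' assume Y': "inverse_subsystem I Xs f Y'" and le: "\<forall>i\<in>I. Y' i \<subseteq> omitting Xs M i"
    let ?Z = "{(i, x). i \<in> I \<and> x \<in> Xs i \<and> x \<notin> Y' i}"
    have Z: "\<forall>i\<in>I. omitting Xs ?Z i = Y' i"
    proof
      fix i assume "i \<in> I"
      then have "Y' i \<subseteq> Xs i" using Y' unfolding inverse_subsystem_def by blast
      moreover have "omitting Xs ?Z i = {x \<in> Xs i. x \<in> Y' i}"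
        using \<open>i \<in> I\<close> unfolding omitting_def by blast
      ultimately show "omitting Xs ?Z i = Y' i" by blast
    qed
    have "inverse_subsystem I Xs f (omitting Xs ?Z)"
      by (rule inverse_subsystem_cong[OF Y']) (use Z in simp)
    moreover have "?Z \<subseteq> Sigma I Xs" by blast
    ultimately have "?Z \<in> \<A>" unfolding \<A>_def by blast
    moreover have "M \<subseteq> ?Z"
    proof
      fix ix assume "ix \<in> M"
      moreover obtain i x where ix: "ix = (i, x)" by (cases ix)
      ultimately have "i \<in> I" "x \<in> Xs i" "x \<notin> omitting Xs M i"
        using M unfolding \<A>_def omitting_def by auto
      then show "ix \<in> ?Z" using le ix by blast
    qed
    ultimately have "?Z = M" using max by blast
    then show "\<forall>i\<in>I. Y' i = omitting Xs M i" using Z by simp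
  qed
qed

lemma inverse_subsystem_images_below:
  fixes I :: "'i::order set"
  assumes comp: "\<And>i j k x. i \<in> I \<Longrightarrow> j \<in> I \<Longrightarrow> k \<in> I \<Longrightarrow> k \<le> j \<Longrightarrow> j \<le> i \<Longrightarrow> x \<in> Xs k
                 \<Longrightarrow> f i j (f j k x) = f i k x"
    and Y: "inverse_subsystem I Xs f Y"
    and ne: "\<And>m. m \<in> I \<Longrightarrow> \<exists>n\<in>I. n \<le> l \<and> n \<le> m \<and> (\<exists>z\<in>Y n. P n z)"
  shows "inverse_subsystem I Xs f (\<lambda>m. {f m n z | n z. n \<in> I \<and> n \<le> l \<and> n \<le> m \<and> z \<in> Y n \<and> P n z})"
  unfolding inverse_subsystem_def
proof (intro ballI conjI impI)
  fix m assume m: "m \<in> I"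
  show "{f m n z | n z. n \<in> I \<and> n \<le> l \<and> n \<le> m \<and> z \<in> Y n \<and> P n z} \<subseteq> Xs m"
    using Y m unfolding inverse_subsystem_def by blast
  show "{f m n z | n z. n \<in> I \<and> n \<le> l \<and> n \<le> m \<and> z \<in> Y n \<and> P n z} \<noteq> {}"
    using ne[OF m] by blast
next
  fix m j x assume mj: "m \<in> I" "j \<in> I" "j \<le> m"
    and "x \<in> {f j n z | n z. n \<in> I \<and> n \<le> l \<and> n \<le> j \<and> z \<in> Y n \<and> P n z}"
  then obtain n z where nz: "x = f j n z" "n \<in> I" "n \<le> l" "n \<le> j" "z \<in> Y n" "P n z"
    by blast
  have "z \<in> Xs n" using Y nz unfolding inverse_subsystem_def by blast
  then have "f m j x = f m n z" using comp[of m j n z] mj nz by blast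
  moreover have "n \<le> m" using nz(4) mj(3) by (rule order_trans)
  ultimately show "f m j x \<in> {f m n z | n z. n \<in> I \<and> n \<le> l \<and> n \<le> m \<and> z \<in> Y n \<and> P n z}"
    using nz by blast
qed

lemma minimal_inverse_subsystem_singleton:
  fixes I :: "'i::order set"
  assumes dir: "\<And>i j. i \<in> I \<Longrightarrow> j \<in> I \<Longrightarrow> \<exists>k\<in>I. k \<le> i \<and> k \<le> j"
    and comp: "\<And>i j k x. i \<in> I \<Longrightarrow> j \<in> I \<Longrightarrow> k \<in> I \<Longrightarrow> k \<le> j \<Longrightarrow> j \<le> i \<Longrightarrow> x \<in> Xs k
                 \<Longrightarrow> f i j (f j k x) = f i k x"
    and Y: "inverse_subsystem I Xs f Y"
    and min: "\<forall>Y'. inverse_subsystem I Xs f Y' \<longrightarrow> (\<forall>i\<in>I. Y' i \<subseteq> Y i) \<longrightarrow> (\<forall>i\<in>I. Y' i = Y i)"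
    and i0: "i0 \<in> I" and a: "a \<in> Y i0"
  shows "Y i0 = {a}"
proof -
  have YX: "Y i \<subseteq> Xs i" and Yne: "Y i \<noteq> {}" if "i \<in> I" for i
    using Y that unfolding inverse_subsystem_def by auto
  have Ycl: "f i j x \<in> Y i" if "i \<in> I" "j \<in> I" "j \<le> i" "x \<in> Y j" for i j x
    using Y that unfolding inverse_subsystem_def by blast
  \<comment> \<open>by minimality the images from below l exhaust Y, so every transition map is onto\<close>
  have onto: "\<exists>z\<in>Y l. f i l z = y" if il: "i \<in> I" "l \<in> I" "l \<le> i" and y: "y \<in> Y i" for i l y
  proof -
    let ?img = "\<lambda>m. {f m n z | n z. n \<in> I \<and> n \<le> l \<and> n \<le> m \<and> z \<in> Y n \<and> z \<in> Y n}"
    have ne: "\<exists>n\<in>I. n \<le> l \<and> n \<le> m \<and> (\<exists>z\<in>Y n. z \<in> Y n)" if "m \<in> I" for m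
      using dir[OF il(2) that] Yne by blast
    have img: "inverse_subsystem I Xs f ?img"
      by (rule inverse_subsystem_images_below[where l=l and P="\<lambda>n z. z \<in> Y n"]) (fact comp Y ne)+
    have "\<forall>m\<in>I. ?img m \<subseteq> Y m" using Ycl by blast
    then have "\<forall>m\<in>I. ?img m = Y m" using spec[OF min, of ?img] img by blast
    then have "?img i = Y i" using il(1) by blast
    then obtain n z where nz: "y = f i n z" "n \<in> I" "n \<le> l" "z \<in> Y n"
      using y by blast
    then have "f i l (f l n z) = y" using comp[of i l n z] YX il by blast
    moreover have "f l n z \<in> Y l" using Ycl nz il by blast
    ultimately show ?thesis by blast
  qed
  \<comment> \<open>by minimality the subsystem of elements lying over a is all of Y\<close>
  let ?over_a = "\<lambda>m. {f m n z | n z. n \<in> I \<and> n \<le> i0 \<and> n \<le> m \<and> z \<in> Y n \<and> f i0 n z = a}"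
  have ne: "\<exists>n\<in>I. n \<le> i0 \<and> n \<le> m \<and> (\<exists>z\<in>Y n. f i0 n z = a)" if "m \<in> I" for m
    using dir[OF i0 that] onto[OF i0 _ _ a] by blast
  have over_a: "inverse_subsystem I Xs f ?over_a"
    by (rule inverse_subsystem_images_below[where l=i0 and P="\<lambda>n z. f i0 n z = a"]) (fact comp Y ne)+
  have "\<forall>m\<in>I. ?over_a m \<subseteq> Y m" using Ycl by blast
  then have "\<forall>m\<in>I. ?over_a m = Y m" using spec[OF min, of ?over_a] over_a by blast
  then have "?over_a i0 = Y i0" using i0 by blast
  then show ?thesis using a by blast
qed

theorem inverse_limit_nonempty:
  fixes I :: "'i::order set" and Xs :: "'i \<Rightarrow> 'x set"
  assumes dir: "\<And>i j. i \<in> I \<Longrightarrow> j \<in> I \<Longrightarrow> \<exists>k\<in>I. k \<le> i \<and> k \<le> j"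
    and fin: "\<And>i. i \<in> I \<Longrightarrow> finite (Xs i)"
    and ne: "\<And>i. i \<in> I \<Longrightarrow> Xs i \<noteq> {}"
    and maps: "\<And>i j x. i \<in> I \<Longrightarrow> j \<in> I \<Longrightarrow> j \<le> i \<Longrightarrow> x \<in> Xs j \<Longrightarrow> f i j x \<in> Xs i"
    and comp: "\<And>i j k x. i \<in> I \<Longrightarrow> j \<in> I \<Longrightarrow> k \<in> I \<Longrightarrow> k \<le> j \<Longrightarrow> j \<le> i \<Longrightarrow> x \<in> Xs k
                 \<Longrightarrow> f i j (f j k x) = f i k x"
  shows "\<exists>h. \<forall>i\<in>I. h i \<in> Xs i \<and> (\<forall>j\<in>I. j \<le> i \<longrightarrow> f i j (h j) = h i)"
proof -
  have "inverse_subsystem I Xs f Xs"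
    using ne maps unfolding inverse_subsystem_def by blast
  then have "\<exists>Y. inverse_subsystem I Xs f Y \<and>
      (\<forall>Y'. inverse_subsystem I Xs f Y' \<longrightarrow> (\<forall>i\<in>I. Y' i \<subseteq> Y i) \<longrightarrow> (\<forall>i\<in>I. Y' i = Y i))"
    using fin minimal_inverse_subsystem_exists by blast
  then obtain Y where Y: "inverse_subsystem I Xs f Y"
    and min: "\<forall>Y'. inverse_subsystem I Xs f Y' \<longrightarrow> (\<forall>i\<in>I. Y' i \<subseteq> Y i) \<longrightarrow> (\<forall>i\<in>I. Y' i = Y i)"
    by (elim exE conjE)
  define h where "h i = (SOME x. x \<in> Y i)" for i
  have h: "h i \<in> Y i" if "i \<in> I" for i
    using Y that unfolding inverse_subsystem_def h_def by (simp add: some_in_eq)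
  have single: "Y i = {h i}" if "i \<in> I" for i
    by (rule minimal_inverse_subsystem_singleton[OF dir comp Y min that h[OF that]])
  show ?thesis
  proof (intro exI[of _ h] ballI conjI impI)
    fix i assume i: "i \<in> I"
    show "h i \<in> Xs i" using Y h i unfolding inverse_subsystem_def by blast
    fix j assume j: "j \<in> I" "j \<le> i"
    have "f i j (h j) \<in> Y i" using Y i j h[OF j(1)] unfolding inverse_subsystem_def by blast
    then show "f i j (h j) = h i" using single[OF i] by simp
  qed
qed

section \<open>Completions along cofinal families\<close>

lemma (in group) rcosets_eq_rcos:
  assumes "subgroup U G" "C \<in> rcosets U" "z \<in> C"
  shows "C = U #> z"
proof -
  obtain x where "x \<in> carrier G" "C = U #> x" using assms(2) unfolding RCOSETS_def by blast
  then show ?thesis using repr_independence[of z U x] assms(1,3) by simp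
qed

lemma quot_limit_restrict_hom:
  assumes "S \<subseteq> T"
  shows "(\<lambda>c. restrict c S) \<in> hom (quot_limit G T) (quot_limit G S)"
proof (rule homI)
  fix c assume "c \<in> carrier (quot_limit G T)"
  then have "c \<in> extensional T" "\<forall>U\<in>T. c U \<in> rcosets\<^bsub>G\<^esub> U" "\<forall>U\<in>T. \<forall>V\<in>T. V \<subseteq> U \<longrightarrow> c V \<subseteq> c U"
    by (simp_all add: quot_limit_def)
  then show "restrict c S \<in> carrier (quot_limit G S)"
    using assms unfolding quot_limit_def by (simp, blast)
next
  fix c d
  show "restrict (c \<otimes>\<^bsub>quot_limit G T\<^esub> d) S = restrict c S \<otimes>\<^bsub>quot_limit G S\<^esub> restrict d S"
    using assms unfolding quot_limit_def by (intro ext) (auto simp: restrict_def)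
qed

lemma (in group) quot_limit_restrict_inj:
  assumes T: "\<forall>U\<in>T. subgroup U G" and cofinal: "\<forall>N\<in>T. \<exists>U\<in>S. U \<subseteq> N" and "S \<subseteq> T"
  shows "inj_on (\<lambda>c. restrict c S) (carrier (quot_limit G T))"
proof (rule inj_onI)
  fix c d assume c: "c \<in> carrier (quot_limit G T)" and d: "d \<in> carrier (quot_limit G T)"
    and eq: "restrict c S = restrict d S"
  show "c = d"
  proof (rule extensionalityI)
    show "c \<in> extensional T" "d \<in> extensional T" using c d by (simp_all add: quot_limit_def)
  next
    fix N assume N: "N \<in> T"
    obtain U where U: "U \<in> S" "U \<subseteq> N" using cofinal N by blast
    \<comment> \<open>both cosets of N contain the common coset c U = d U of the smaller subgroup U\<close>
    have "c U = d U" using eq U(1) by (metis restrict_apply')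
    moreover have "c U \<in> rcosets U" using c U \<open>S \<subseteq> T\<close> by (auto simp: quot_limit_def)
    ultimately obtain z where z: "z \<in> c U" "z \<in> d U"
      using subgroup.rcosets_non_empty T U \<open>S \<subseteq> T\<close> by (metis ex_in_conv subsetD)
    have U_T: "U \<in> T" using U(1) \<open>S \<subseteq> T\<close> by blast
    have "c U \<subseteq> c N" "c N \<in> rcosets N" "d U \<subseteq> d N" "d N \<in> rcosets N"
      using c d N U_T U(2) by (simp_all add: quot_limit_def)
    then have "z \<in> c N" "c N \<in> rcosets N" "z \<in> d N" "d N \<in> rcosets N" using z by blast+
    then show "c N = d N" using rcosets_eq_rcos T N by metis
  qed
qed

lemma (in group) quot_limit_restrict_onto:
  assumes T: "\<forall>U\<in>T. subgroup U G" and cofinal: "\<forall>N\<in>T. \<exists>U\<in>S. U \<subseteq> N" and "S \<subseteq> T"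
    and dir: "directed_family S"
  shows "carrier (quot_limit G S) \<subseteq> (\<lambda>c. restrict c S) ` carrier (quot_limit G T)"
proof
  fix e assume e: "e \<in> carrier (quot_limit G S)"
  have eS: "e U \<in> rcosets U" "subgroup U G" if "U \<in> S" for U
    using e that T \<open>S \<subseteq> T\<close> by (auto simp: quot_limit_def)
  have e_mono: "e V \<subseteq> e U" if "U \<in> S" "V \<in> S" "V \<subseteq> U" for U V
    using e that by (auto simp: quot_limit_def)
  have induced: "N <#> e U = N #> z" if hyps: "N \<in> T" "U \<in> S" "U \<subseteq> N" "z \<in> e U" for N U z
  proof -
    have "e U = U #> z" using rcosets_eq_rcos eS hyps(2,4) by blast
    moreover have "z \<in> carrier G"
      using subgroup.rcosets_carrier[OF eS(2)[OF hyps(2)] is_group eS(1)[OF hyps(2)]] hyps(4) by blast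
    ultimately show ?thesis
      using set_mult_rcos_absorb[of N U z] T hyps subgroup.one_closed[OF eS(2)[OF hyps(2)]] by simp
  qed
  have well_defined: "N <#> e U1 = N <#> e U2"
    if hyps: "N \<in> T" "U1 \<in> S" "U1 \<subseteq> N" "U2 \<in> S" "U2 \<subseteq> N" for N U1 U2
  proof -
    obtain W where W: "W \<in> S" "W \<subseteq> U1" "W \<subseteq> U2"
      using dir hyps(2,4) unfolding directed_family_def by blast
    obtain z where z: "z \<in> e W" using subgroup.rcosets_non_empty eS W(1) by blast
    then have "z \<in> e U1" "z \<in> e U2" using e_mono hyps W by blast+
    then show ?thesis using induced hyps by simp
  qed
  define sel where "sel N = (SOME U. U \<in> S \<and> U \<subseteq> N)" for N
  have sel: "sel N \<in> S" "sel N \<subseteq> N" if "N \<in> T" for N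
  proof -
    have "\<exists>U. U \<in> S \<and> U \<subseteq> N" using cofinal that by blast
    then have "sel N \<in> S \<and> sel N \<subseteq> N" unfolding sel_def by (rule someI_ex)
    then show "sel N \<in> S" "sel N \<subseteq> N" by blast+
  qed
  define c where "c = (\<lambda>N\<in>T. N <#> e (sel N))"
  have c_rcos: "c N = N #> z" if "N \<in> T" "U \<in> S" "U \<subseteq> N" "z \<in> e U" for N U z
    using well_defined[OF that(1) sel[OF that(1)] that(2,3)] induced[OF that] that(1)
    unfolding c_def by simp
  have c_ex: "\<exists>z\<in>carrier G. c N = N #> z \<and> z \<in> e (sel N)" if N: "N \<in> T" for N
  proof -
    obtain z where z: "z \<in> e (sel N)" using subgroup.rcosets_non_empty eS sel[OF N] by blast
    moreover have "z \<in> carrier G"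
      using subgroup.rcosets_carrier[OF eS(2) is_group eS(1)] sel[OF N] z by blast
    ultimately show ?thesis using c_rcos[OF N sel[OF N]] by blast
  qed
  have c_mono: "c N2 \<subseteq> c N1" if N: "N1 \<in> T" "N2 \<in> T" "N2 \<subseteq> N1" for N1 N2
  proof -
    obtain z where z: "z \<in> carrier G" "c N2 = N2 #> z" "z \<in> e (sel N2)" using c_ex N(2) by blast
    then have "c N1 = N1 #> z" using c_rcos[of N1 "sel N2" z] N sel[OF N(2)] by blast
    then show "c N2 \<subseteq> c N1" using z(2) N(3) unfolding r_coset_def by blast
  qed
  have "c \<in> extensional T" unfolding c_def by simp
  moreover have "c N \<in> rcosets N" if "N \<in> T" for N
    using c_ex[OF that] unfolding RCOSETS_def by auto
  ultimately have "c \<in> carrier (quot_limit G T)"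
    using c_mono unfolding quot_limit_def by simp
  moreover have "restrict c S = e"
  proof (rule extensionalityI)
    show "restrict c S \<in> extensional S" by simp
    show "e \<in> extensional S" using e by (simp add: quot_limit_def)
  next
    fix U assume U: "U \<in> S"
    then obtain z where z: "c U = U #> z" "z \<in> e (sel U)" using c_ex \<open>S \<subseteq> T\<close> by blast
    then have "z \<in> e U" using e_mono U sel \<open>S \<subseteq> T\<close> by blast
    then have "e U = U #> z" using rcosets_eq_rcos eS[OF U] by blast
    then show "restrict c S U = e U" using z(1) U by simp
  qed
  ultimately show "e \<in> (\<lambda>c. restrict c S) ` carrier (quot_limit G T)" by blast
qed

theorem (in group) quot_limit_cofinal_iso:
  assumes "\<forall>U\<in>T. subgroup U G" "\<forall>N\<in>T. \<exists>U\<in>S. U \<subseteq> N" "S \<subseteq> T" "directed_family S"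
  shows "(\<lambda>c. restrict c S) \<in> iso (quot_limit G T) (quot_limit G S)"
  using quot_limit_restrict_hom[OF assms(3)] quot_limit_restrict_inj[OF assms(1-3)]
    quot_limit_restrict_onto[OF assms] unfolding iso_def bij_betw_def hom_def by blast

section \<open>Cofinality of S\<close>

context group
begin

lemma p_power_index_normals_normal: "U \<in> p_power_index_normals G p \<Longrightarrow> U \<lhd> G"
  unfolding p_power_index_normals_def by blast

lemma p_power_index_normals_subgroup: "U \<in> p_power_index_normals G p \<Longrightarrow> subgroup U G"
  using p_power_index_normals_normal normal_imp_subgroup by blast

lemma p_power_index_normals_finite_index:
  assumes "U \<in> p_power_index_normals G p" "p > 0"
  shows "finite (rcosets U)"
proof -
  obtain k where "card (rcosets U) = p ^ k" using assms(1) unfolding p_power_index_normals_def by blast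
  then show ?thesis using assms(2) card_gt_0_iff by fastforce
qed

lemma persistent_coset:
  assumes fin: "finite (rcosets M)" and S: "\<forall>V\<in>S. V \<subseteq> carrier G" and U: "U \<in> S"
    and none: "\<not> (\<exists>V\<in>S. V \<subseteq> M)"
  shows "\<exists>U0\<in>S. U0 \<subseteq> U \<and> (\<exists>x0\<in>U0. x0 \<notin> M \<and> (\<forall>V\<in>S. V \<subseteq> U0 \<longrightarrow> (\<exists>x\<in>V. M #> x = M #> x0)))"
proof -
  define img where "img V = (\<lambda>x. M #> x) ` V" for V
  have fin_img: "finite (img V)" if "V \<in> S" for V
  proof -
    have "img V \<subseteq> rcosets M" using S that unfolding img_def RCOSETS_def by blast
    then show ?thesis using fin by (rule finite_subset)
  qed
  \<comment> \<open>choose U0 below U whose image in the finite set of cosets of M is as small as possible\<close>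
  have "\<exists>U0. (U0 \<in> S \<and> U0 \<subseteq> U) \<and> (\<forall>V. V \<in> S \<and> V \<subseteq> U \<longrightarrow> card (img U0) \<le> card (img V))"
    using ex_has_least_nat[where P="\<lambda>V. V \<in> S \<and> V \<subseteq> U" and k=U and m="\<lambda>V. card (img V)"] U
    by blast
  then obtain U0 where U0: "U0 \<in> S" "U0 \<subseteq> U"
    and least: "\<forall>V. V \<in> S \<and> V \<subseteq> U \<longrightarrow> card (img U0) \<le> card (img V)"
    by blast
  obtain x0 where x0: "x0 \<in> U0" "x0 \<notin> M" using none U0(1) by blast
  have "\<exists>x\<in>V. M #> x = M #> x0" if V: "V \<in> S" "V \<subseteq> U0" for V
  proof -
    have sub: "img V \<subseteq> img U0" using V(2) unfolding img_def by (rule image_mono)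
    have "V \<subseteq> U" using V(2) U0(2) by (rule subset_trans)
    then have "card (img U0) \<le> card (img V)" using least V(1) by blast
    then have "img V = img U0"
      using card_subset_eq[OF fin_img[OF U0(1)] sub] card_mono[OF fin_img[OF U0(1)] sub] by linarith
    moreover have "M #> x0 \<in> img U0" unfolding img_def using x0(1) by (rule imageI)
    ultimately have "M #> x0 \<in> (\<lambda>x. M #> x) ` V" unfolding img_def by simp
    then obtain x where "x \<in> V" "M #> x0 = M #> x" by (rule imageE)
    then show ?thesis by (intro bexI[of _ x]) simp_all
  qed
  then show ?thesis using U0 x0 by blast
qed

lemma H1_limit_element_through_coset:
  assumes fg: "finitely_generated G" and p: "p > 0" and SP: "S \<subseteq> p_power_index_normals G p"
    and dir: "directed_family S" and U0: "U0 \<in> S"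
    and persistent: "\<forall>V\<in>S. V \<subseteq> U0 \<longrightarrow> (\<exists>x\<in>V. M #> x = M #> x0)"
  shows "\<exists>h\<in>H1_limit G p S. \<exists>x\<in>U0. h U0 = frattini_p G p U0 #> x \<and> M #> x = M #> x0"
proof -
  let ?\<Phi> = "\<lambda>V. frattini_p G p V"
  have Vsub: "subgroup V G" if V: "V \<in> S" for V
    using SP V p_power_index_normals_subgroup by blast
  have VG: "V \<subseteq> carrier G" if "V \<in> S" for V using subgroup.subset[OF Vsub[OF that]] .
  have below: "\<exists>W\<in>S. W \<subseteq> V \<and> W \<subseteq> U" if "V \<in> S" "U \<in> S" for V U
    using dir that unfolding directed_family_def by blast
  \<comment> \<open>the cosets of the Frattini subgroups that meet the persistent coset of M far down in S\<close>
  define Xs where "Xs V = {?\<Phi> V #> x | x. \<exists>W\<in>S. W \<subseteq> V \<and> W \<subseteq> U0 \<and> x \<in> W \<and> M #> x = M #> x0}" for V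
  define f where "f V W C = ?\<Phi> V <#> C" for V W :: "'a set" and C
  have f: "f V W (?\<Phi> W #> x) = ?\<Phi> V #> x" if "V \<in> S" "W \<in> S" "W \<subseteq> V" "x \<in> carrier G" for V W x
    unfolding f_def
    by (rule set_mult_rcos_absorb[OF subgroup_frattini_p[OF Vsub[OF that(1)]] frattini_p_mono[OF that(3)]
          subgroup.one_closed[OF subgroup_frattini_p[OF Vsub[OF that(2)]]] that(4)])
  have Xs_H1: "Xs V \<subseteq> carrier (H1_mod_p G p V)" for V
    unfolding Xs_def carrier_H1_mod_p by blast
  have "\<exists>h. \<forall>V\<in>S. h V \<in> Xs V \<and> (\<forall>W\<in>S. W \<le> V \<longrightarrow> f V W (h W) = h V)"
  proof (rule inverse_limit_nonempty)
    show "\<exists>K\<in>S. K \<le> V \<and> K \<le> W" if "V \<in> S" "W \<in> S" for V W using below that by blast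
  next
    fix V assume V: "V \<in> S"
    have "V \<in> p_power_index_normals G p" using SP V by blast
    then have "finitely_generated (G\<lparr>carrier := V\<rparr>)"
      using finitely_generated_finite_index_subgroup[OF fg Vsub[OF V]] p_power_index_normals_finite_index[OF _ p]
      by blast
    then show "finite (Xs V)"
      using finite_H1_mod_p[OF Vsub[OF V] _ p] Xs_H1 finite_subset by blast
    obtain W where W: "W \<in> S" "W \<subseteq> V" "W \<subseteq> U0" using below[OF V U0] by blast
    then obtain x where "x \<in> W" "M #> x = M #> x0" using persistent by blast
    then show "Xs V \<noteq> {}" unfolding Xs_def using W by blast
  next
    fix V W C assume VW: "V \<in> S" "W \<in> S" "W \<le> V" and "C \<in> Xs W"
    then obtain x K where C: "C = ?\<Phi> W #> x" and K: "K \<in> S" "K \<subseteq> W" "K \<subseteq> U0" "x \<in> K"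
      and x: "M #> x = M #> x0"
      unfolding Xs_def by blast
    have "x \<in> carrier G" using VG[OF K(1)] K(4) by blast
    then have "f V W C = ?\<Phi> V #> x" using f[OF VW] C by simp
    moreover have "K \<subseteq> V" using K(2) VW(3) by blast
    ultimately show "f V W C \<in> Xs V" unfolding Xs_def using K x by blast
  next
    fix V W K C assume VWK: "V \<in> S" "W \<in> S" "K \<in> S" "K \<le> W" "W \<le> V" and "C \<in> Xs K"
    then obtain x where C: "C = ?\<Phi> K #> x" and "x \<in> K" unfolding Xs_def by blast
    then have x: "x \<in> carrier G" using VG[OF VWK(3)] by blast
    have "K \<subseteq> V" using VWK(4,5) by blast
    then show "f V W (f W K C) = f V K C"
      using f[OF VWK(2,3,4) x] f[OF VWK(1,2,5) x] f[OF VWK(1,3) _ x] C by simp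
  qed
  then obtain h where h: "\<forall>V\<in>S. h V \<in> Xs V" and compatible: "\<forall>V\<in>S. \<forall>W\<in>S. W \<subseteq> V \<longrightarrow> f V W (h W) = h V"
    by blast
  have "restrict h S \<in> H1_limit G p S"
    unfolding H1_limit_def
  proof (intro CollectI conjI ballI impI)
    show "restrict h S \<in> extensional S" by simp
  next
    fix V assume "V \<in> S"
    then show "restrict h S V \<in> carrier (H1_mod_p G p V)" using h Xs_H1 by auto
  next
    fix V W assume "V \<in> S" "W \<in> S" "W \<subseteq> V"
    then show "frattini_p G p V <#> restrict h S W = restrict h S V"
      using compatible unfolding f_def by simp
  qed
  moreover obtain x W where "h U0 = ?\<Phi> U0 #> x" "W \<in> S" "W \<subseteq> U0" "x \<in> W" "M #> x = M #> x0"
    using h U0 unfolding Xs_def by blast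
  ultimately show ?thesis using U0 by (intro bexI[of _ "restrict h S"] bexI[of _ x]) auto
qed

lemma descend_below_elementary_abelian_extension:
  assumes fg: "finitely_generated G" and p: "p > 0" and SP: "S \<subseteq> p_power_index_normals G p"
    and dir: "directed_family S" and H1: "H1_limit G p S = {\<lambda>U\<in>S. frattini_p G p U}"
    and M: "subgroup M G" "finite (rcosets M)"
    and pow: "\<forall>x\<in>M'. x [^] p \<in> M" and comm: "\<forall>x\<in>M'. \<forall>y\<in>M'. x \<otimes> y \<otimes> inv x \<otimes> inv y \<in> M"
    and U: "U \<in> S" "U \<subseteq> M'"
  shows "\<exists>U\<in>S. U \<subseteq> M"
proof (rule ccontr)
  assume none: "\<not> (\<exists>U\<in>S. U \<subseteq> M)"
  have Ssub: "subgroup V G" if "V \<in> S" for V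
    using SP that p_power_index_normals_subgroup by blast
  then have SG: "\<forall>V\<in>S. V \<subseteq> carrier G" using subgroup.subset by blast
  obtain U0 x0 where U0: "U0 \<in> S" "U0 \<subseteq> U" and x0: "x0 \<in> U0" "x0 \<notin> M"
    and persistent: "\<forall>V\<in>S. V \<subseteq> U0 \<longrightarrow> (\<exists>x\<in>V. M #> x = M #> x0)"
    using persistent_coset[OF M(2) SG U(1) none] by blast
  obtain h x where "h \<in> H1_limit G p S" "x \<in> U0" "h U0 = frattini_p G p U0 #> x" "M #> x = M #> x0"
    using H1_limit_element_through_coset[OF fg p SP dir U0(1) persistent] by blast
  \<comment> \<open>the inverse limit of the H_1 is trivial, so x lies in the Frattini subgroup of U0, which is inside M\<close>
  moreover have "h U0 = frattini_p G p U0" using \<open>h \<in> H1_limit G p S\<close> H1 U0(1) by simp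
  ultimately have eq: "frattini_p G p U0 #> x = frattini_p G p U0" by simp
  have U0G: "subgroup U0 G" using Ssub U0(1) .
  have x: "x \<in> carrier G" using \<open>x \<in> U0\<close> subgroup.subset[OF U0G] by blast
  have "x \<in> frattini_p G p U0"
    using rcos_self[OF x subgroup_frattini_p[OF U0G, where p=p]] eq by simp
  moreover have "U0 \<subseteq> M'" using U0(2) U(2) by blast
  then have "frattini_p G p U0 \<subseteq> M"
    using frattini_p_minimal[OF M(1)] pow comm by blast
  ultimately have "M #> x = M" using coset_join2[OF x M(1)] by blast
  then have "M #> x0 = M" using \<open>M #> x = M #> x0\<close> by simp
  moreover have "x0 \<in> carrier G" using x0(1) subgroup.subset[OF U0G] by blast
  ultimately show False
    using coset_join1[OF _ _ M(1)] x0(2) by blast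
qed

lemma cofinal_in_p_power_index_normals:
  assumes fg: "finitely_generated G" and p: "Factorial_Ring.prime p" and SP: "S \<subseteq> p_power_index_normals G p"
    and dir: "directed_family S" and H1: "H1_limit G p S = {\<lambda>U\<in>S. frattini_p G p U}"
    and N: "N \<in> p_power_index_normals G p"
  shows "\<exists>U\<in>S. U \<subseteq> N"
proof -
  have p0: "p > 0" using prime_gt_0_nat[OF p] .
  have "\<forall>M\<in>p_power_index_normals G p. card (rcosets M) = n \<longrightarrow> (\<exists>U\<in>S. U \<subseteq> M)" for n
  proof (induction n rule: less_induct)
    case (less n)
    show ?case
    proof (intro ballI impI)
      fix M assume M: "M \<in> p_power_index_normals G p" and n: "card (rcosets M) = n"
      interpret M: normal M G using p_power_index_normals_normal[OF M] .
      have finM: "finite (rcosets M)" using p_power_index_normals_finite_index[OF M p0] .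
      obtain j where j: "card (rcosets M) = p ^ j" using M unfolding p_power_index_normals_def by blast
      show "\<exists>U\<in>S. U \<subseteq> M"
      proof (cases "M = carrier G")
        case True
        obtain U where "U \<in> S" using dir unfolding directed_family_def by blast
        then have "U \<subseteq> carrier G" using SP p_power_index_normals_subgroup subgroup.subset by blast
        then show ?thesis using True \<open>U \<in> S\<close> by blast
      next
        case False
        then obtain M' where M': "M' \<lhd> G" "M \<subseteq> M'" "card (rcosets M') < card (rcosets M)"
          "\<forall>x\<in>M'. x [^] p \<in> M" "\<forall>x\<in>M'. \<forall>y\<in>M'. x \<otimes> y \<otimes> inv x \<otimes> inv y \<in> M"
          using M.prime_power_index_extension[OF p j] by blast
        have "card (rcosets M') dvd p ^ j"
          using index_dvd_index[OF M'(1) M.normal_axioms M'(2) finM] j by simp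
        then have "M' \<in> p_power_index_normals G p"
          using M'(1) divides_primepow_nat[OF p] unfolding p_power_index_normals_def by blast
        then obtain U where "U \<in> S" "U \<subseteq> M'" using less.IH[of "card (rcosets M')"] M'(3) n by blast
        then show ?thesis
          using descend_below_elementary_abelian_extension[OF fg p0 SP dir H1 M.subgroup_axioms finM M'(4,5)]
          by blast
      qed
    qed
  qed
  then show ?thesis using N by blast
qed

end

theorem lemma3p4:
  fixes A :: "('a, 'b) monoid_scheme" and p :: nat and S :: "'a set set"
  assumes "orientable_surface_group A"
    and "Factorial_Ring.prime p"
    and "S \<subseteq> p_power_index_normals A p"
    and "directed_family S"
    and "H1_limit A p S = {\<lambda>U\<in>S. frattini_p A p U}"
  shows "(\<lambda>c. restrict c S) \<in> iso (pro_p_completion A p) (quot_limit A S)"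
proof -
  interpret group A using assms(1) unfolding orientable_surface_group_def by blast
  have fg: "finitely_generated A" using orientable_surface_group_finitely_generated[OF assms(1)] .
  have "\<forall>U\<in>p_power_index_normals A p. subgroup U A"
    using p_power_index_normals_subgroup by blast
  moreover have "\<forall>N\<in>p_power_index_normals A p. \<exists>U\<in>S. U \<subseteq> N"
    using cofinal_in_p_power_index_normals[OF fg assms(2-5)] by blast
  ultimately show ?thesis
    unfolding pro_p_completion_def using assms(3,4) by (rule quot_limit_cofinal_iso)
qed

end
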